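(* Let $\lambda$ be a partition and $n\ge|\lambda|+\lambda_1$. The map $\Phi=\Phi^{(n)}_\lambda:V_{\lambda^{(n+1)}}\to V_{\lambda^{(n)}}$ satisfies: (1) $\Phi T_i=T_i\Phi$ for $1\le i\le n-1$; (2) $\Phi X_i=X_i\Phi$ for $1\le i\le n$; (3) $\Phi X_{n+1}=0$; (4) $\Phi\, t^{-n}\pi_{n+1}T_n=t^{-(n-1)}\pi_n\Phi$; (5) $\Phi\theta_i^{(n+1)}=\theta_i^{(n)}\Phi$ for $1\le i\le n$; (6) $\Phi(\theta^{(n+1)}_{n+1}-t^{n-|\lambda|})=0$. Here $\theta^{(m)}_i,\pi_m$ denote the elements of $\mathcal{D}_m$ acting on $V_{\lambda^{(m)}}$.
   Context: All algebras over $\mathbb{Q}(q,t)$. $\mathcal{H}_m$: $T_1,\dots,T_{m-1}$, $(T_i-1)(T_i+t)=0$, braid relations. $\mathcal{A}_m$: $\mathcal{H}_m$ plus commuting invertible $\theta_1,\dots,\theta_m$ with $\theta_{i+1}=tT_i^{-1}\theta_iT_i^{-1}$, $T_i\theta_j=\theta_jT_i$ ($j\notin\{i,i+1\}$); $\pi_m=t^{m-1}\theta_1T_1^{-1}\cdots T_{m-1}^{-1}$. $\mathcal{D}_m$: $\mathcal{A}_m$ plus commuting $X_1,\dots,X_m$ with $X_{i+1}=tT_i^{-1}X_iT_i^{-1}$, $T_iX_j=X_jT_i$ ($j\notin\{i,i+1\}$), $\pi_mX_i\pi_m^{-1}=X_{i+1}$ ($i<m$), $\pi_mX_m\pi_m^{-1}=qX_1$.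 English notation; content $c(\square)=b-a$ for row $a$, column $b$. For a partition $\nu$ with $|\nu|=m$, $S_\nu$ is the irreducible $\mathcal{H}_m$-module with basis $e_\tau$ ($\tau$ standard Young tableau of shape $\nu$), $\bar\theta_ie_\tau=t^{c_\tau(i)}e_\tau$ ($c_\tau(i)$ content of the box labelled $i$; $\bar\theta_1=1$, $\bar\theta_{i+1}=tT_i^{-1}\bar\theta_iT_i^{-1}$), $(tT_i^{-1}\bar\theta_i-\bar\theta_itT_i^{-1})e_\tau=(t^{c_\tau(i)}-t^{c_\tau(i+1)})e_{s_i\tau}$ when $s_i\tau$ (swap of $i,i+1$) is standard and $c_\tau(i)-c_\tau(i+1)>1$, $T_ie_\tau=e_\tau$ / $-te_\tau$ for $i,i+1$ in same row / column. It is an $\mathcal{A}_m$-module via $T_i\mapsto T_i$, $\theta_1\mapsto1$, and $V_\nu=\mathcal{D}_m\otimes_{\mathcal{A}_m}S_\nu$, with basis $X^\alpha\otimes e_\tau$. For $n\ge|\lambda|+\lambda_1$, $\lambda^{(n)}=(n-|\lambda|,\lambda_1,\lambda_2,\dots)$ and $\square_0$ is the unique box of $\lambda^{(n+1)}$ not in $\lambda^{(n)}$. $\mathfrak{q}:S_{\lambda^{(n+1)}}\to S_{\lambda^{(n)}}$ sends $e_\tau$ to $e_{\tau|_{\lambda^{(n)}}}$ if $\tau(\square_0)=n+1$ and to $0$ otherwise. $\Phi^{(n)}_\lambda$ is the linear map $X^\alpha\otimes v\mapsto[\alpha_{n+1}=0]\,X_1^{\alpha_1}\cdots X_n^{\alpha_n}\otimes\mathfrak{q}(v)$.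 *)

theory Defs
  imports "HOL-Computational_Algebra.Polynomial" "HOL-Computational_Algebra.Fraction_Field"
begin

section \<open>Ground field Q(q,t)\<close>

type_synonym K = "rat poly poly fract"

definition qq :: K where "qq = Fract [:0, 1:] 1"
definition tt :: K where "tt = Fract [:[:0, 1:]:] 1"

definition is_partition :: "nat list \<Rightarrow> bool" where
  "is_partition lam \<longleftrightarrow> sorted_wrt (\<ge>) lam \<and> 0 \<notin> set lam"

definition lam1 :: "nat list \<Rightarrow> nat" where
  "lam1 lam = (case lam of [] \<Rightarrow> 0 | x # _ \<Rightarrow> x)"

definition shift_part :: "nat \<Rightarrow> nat list \<Rightarrow> nat list" where
  "shift_part n lam = (n - sum_list lam) # lam"

text \<open>Boxes (row a, column b), 1-indexed, English notation.\<close>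
definition boxes :: "nat list \<Rightarrow> (nat \<times> nat) set" where
  "boxes nu = {(a, b). 1 \<le> a \<and> a \<le> length nu \<and> 1 \<le> b \<and> b \<le> nu ! (a - 1)}"

type_synonym tab = "nat \<Rightarrow> nat \<times> nat"

text \<open>A standard tableau of shape nu (|nu| = m) is encoded as the map from labels 1..m
  to boxes (bijective, increasing along rows and columns); labels outside 1..m go to (0,0).\<close>
definition SYT :: "nat list \<Rightarrow> tab set" where
  "SYT nu = {\<tau>. bij_betw \<tau> {1..sum_list nu} (boxes nu)
      \<and> (\<forall>k. k \<notin> {1..sum_list nu} \<longrightarrow> \<tau> k = (0, 0))
      \<and> (\<forall>i\<in>{1..sum_list nu}. \<forall>j\<in>{1..sum_list nu}.
            fst (\<tau> i) \<le> fst (\<tau> j) \<and> snd (\<tau> i) \<le> snd (\<tau> j) \<longrightarrow> i \<le> j)}"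

definition content :: "tab \<Rightarrow> nat \<Rightarrow> int" where
  "content \<tau> i = int (snd (\<tau> i)) - int (fst (\<tau> i))"

definition tpow :: "int \<Rightarrow> K" where
  "tpow c = tt powi c"

definition swap_tab :: "nat \<Rightarrow> tab \<Rightarrow> tab" where
  "swap_tab i \<tau> = (\<lambda>k. if k = i then \<tau> (Suc i) else if k = Suc i then \<tau> i else \<tau> k)"

text \<open>Tcoef nu i sigma tau = coefficient of e_tau in T_i e_sigma.  This is the unique
  action determined by the conditions in the paper (theta-bar_i e_tau = t^{c_tau(i)} e_tau,
  the intertwiner normalisation, and the row/column scalars).\<close>
definition Tcoef :: "nat list \<Rightarrow> nat \<Rightarrow> tab \<Rightarrow> tab \<Rightarrow> K" where
  "Tcoef nu i \<sigma> \<tau> =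
    (let a = tpow (content \<sigma> i); b = tpow (content \<sigma> (Suc i)) in
     if \<tau> = \<sigma> then (1 - tt) * a / (a - b)
     else if \<tau> = swap_tab i \<sigma> \<and> \<tau> \<in> SYT nu then
       (if content \<sigma> i - content \<sigma> (Suc i) > 1 then 1
        else (tt * a - b) * (a - tt * b) / (a - b)^2)
     else 0)"

type_synonym svec = "tab \<Rightarrow> K"

definition ST :: "nat list \<Rightarrow> nat \<Rightarrow> svec \<Rightarrow> svec" where
  "ST nu i s = (\<lambda>\<tau>. \<Sum>\<sigma>\<in>SYT nu. Tcoef nu i \<sigma> \<tau> * s \<sigma>)"

text \<open>T_i^{-1} = t^{-1} (T_i + t - 1)\<close>
definition STinv :: "nat list \<Rightarrow> nat \<Rightarrow> svec \<Rightarrow> svec" where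
  "STinv nu i s = (\<lambda>\<tau>. (ST nu i s \<tau> + (tt - 1) * s \<tau>) / tt)"

text \<open>Action of pi_m = t^{m-1} theta_1 T_1^{-1} ... T_{m-1}^{-1} on S_nu (theta_1 acts as 1).\<close>
definition Pbar :: "nat list \<Rightarrow> svec \<Rightarrow> svec" where
  "Pbar nu s = (\<lambda>\<tau>. tt ^ (sum_list nu - 1) * foldr (STinv nu) [1..<sum_list nu] s \<tau>)"

section \<open>Polynomials in X_1, X_2, ... as coefficient functions on exponent vectors\<close>

type_synonym mpol = "(nat \<Rightarrow> nat) \<Rightarrow> K"

definition pX :: "nat \<Rightarrow> mpol \<Rightarrow> mpol" where
  "pX j f = (\<lambda>\<alpha>. if \<alpha> j = 0 then 0 else f (\<alpha>(j := \<alpha> j - 1)))"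

definition psw :: "nat \<Rightarrow> mpol \<Rightarrow> mpol" where
  "psw i f = (\<lambda>\<alpha>. f (\<alpha>(i := \<alpha> (Suc i), Suc i := \<alpha> i)))"

text \<open>D_i f = X_i (f - s_i f) / (X_{i+1} - X_i)\<close>
definition pD :: "nat \<Rightarrow> mpol \<Rightarrow> mpol" where
  "pD i f = pX i (THE h. finite {\<alpha>. h \<alpha> \<noteq> 0} \<and>
      (\<lambda>\<alpha>. pX (Suc i) h \<alpha> - pX i h \<alpha>) = (\<lambda>\<alpha>. f \<alpha> - psw i f \<alpha>))"

text \<open>f(X_1,...,X_m) |-> f(X_2,...,X_m,q X_1)\<close>
definition ppi :: "nat \<Rightarrow> mpol \<Rightarrow> mpol" where
  "ppi m f = (\<lambda>\<beta>. qq ^ (\<beta> 1) *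
      f (\<lambda>j. if 1 \<le> j \<and> j < m then \<beta> (Suc j) else if j = m then \<beta> 1 else \<beta> j))"

section \<open>The D_m-module V_nu = D_m \<otimes>_{A_m} S_nu\<close>

text \<open>An element sum c_{alpha,tau} X^alpha \<otimes> e_tau is stored as v tau alpha = c_{alpha,tau}.\<close>
type_synonym vec = "tab \<Rightarrow> mpol"

definition Vspace :: "nat list \<Rightarrow> vec set" where
  "Vspace nu = {v. finite {(\<tau>, \<alpha>). v \<tau> \<alpha> \<noteq> 0} \<and>
     (\<forall>\<tau> \<alpha>. v \<tau> \<alpha> \<noteq> 0 \<longrightarrow> \<tau> \<in> SYT nu \<and> (\<forall>k. k \<notin> {1..sum_list nu} \<longrightarrow> \<alpha> k = 0))}"

definition VX :: "nat \<Rightarrow> vec \<Rightarrow> vec" where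
  "VX j v = (\<lambda>\<tau>. pX j (v \<tau>))"

text \<open>T_i (f \<otimes> w) = (s_i f) \<otimes> T_i w + (t - 1) D_i(f) \<otimes> w  (PBW form of the relations)\<close>
definition VT :: "nat list \<Rightarrow> nat \<Rightarrow> vec \<Rightarrow> vec" where
  "VT nu i v = (\<lambda>\<tau> \<alpha>. (\<Sum>\<sigma>\<in>SYT nu. Tcoef nu i \<sigma> \<tau> * psw i (v \<sigma>) \<alpha>)
                      + (tt - 1) * pD i (v \<tau>) \<alpha>)"

definition VTinv :: "nat list \<Rightarrow> nat \<Rightarrow> vec \<Rightarrow> vec" where
  "VTinv nu i v = (\<lambda>\<tau> \<alpha>. (VT nu i v \<tau> \<alpha> + (tt - 1) * v \<tau> \<alpha>) / tt)"

text \<open>pi_m (f \<otimes> w) = f(X_2,...,X_m,qX_1) \<otimes> pi_m w\<close>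
definition Vpi :: "nat list \<Rightarrow> vec \<Rightarrow> vec" where
  "Vpi nu v = (\<lambda>\<tau> \<alpha>. \<Sum>\<sigma>\<in>SYT nu.
      Pbar nu (\<lambda>\<rho>. if \<rho> = \<sigma> then 1 else 0) \<tau> * ppi (sum_list nu) (v \<sigma>) \<alpha>)"

text \<open>theta_1 = t^{-(m-1)} pi_m T_{m-1} ... T_1,  theta_{i+1} = t T_i^{-1} theta_i T_i^{-1}\<close>
fun Vtheta :: "nat list \<Rightarrow> nat \<Rightarrow> vec \<Rightarrow> vec" where
  "Vtheta nu 0 v = v"
| "Vtheta nu (Suc 0) v =
     (\<lambda>\<tau> \<alpha>. Vpi nu (foldr (VT nu) (rev [1..<sum_list nu]) v) \<tau> \<alpha> / tt ^ (sum_list nu - 1))"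
| "Vtheta nu (Suc (Suc i)) v =
     (\<lambda>\<tau> \<alpha>. tt * VTinv nu (Suc i) (Vtheta nu (Suc i) (VTinv nu (Suc i) v)) \<tau> \<alpha>)"

text \<open>X^alpha \<otimes> e_tau |-> [alpha_{n+1} = 0] X^alpha \<otimes> q(e_tau), where q(e_tau) = e_{tau|} if
  tau(box_0) = n+1, box_0 = (1, n+1-|lambda|), and 0 otherwise.\<close>
definition Phi :: "nat \<Rightarrow> nat list \<Rightarrow> vec \<Rightarrow> vec" where
  "Phi n lam v = (\<lambda>\<rho> \<alpha>. if \<alpha> (Suc n) = 0 \<and> \<rho> \<in> SYT (shift_part n lam)
      then v (\<rho>(Suc n := (1, Suc n - sum_list lam))) \<alpha> else 0)"

end

theory Submission
  imports Defs "HOL-Library.FuncSet" "HOL-Combinatorics.Transposition"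
begin

(* Phi restricts, fibrewise over the monomials X^alpha with alpha_{n+1} = 0, the seminormal
   basis of lambda^(n+1) to the tableaux carrying n+1 in the new box (1, n+1-|lambda|) of the
   first row.  For i < n the swap s_i never moves that entry and leaves the contents of i and
   i+1 unchanged, so T_1, ..., T_{n-1} have the same seminormal matrices on both sides; this
   gives (1), and (2), (3) are immediate.  For (4) the divided-difference part of T_n vanishes
   on the relevant monomials, so pi_{n+1} T_n acts on S through T_1^-1 ... T_n^-1 T_n, which by
   the quadratic relation is T_1^-1 ... T_{n-1}^-1 and again commutes with the restriction.
   (5) follows from (1), (4) and the recursion defining theta_i.  For (6), on monomials free
   of X_{n+1} the element theta_{n+1} acts on S as t^n T_n^-1 ... T_1^-1 T_1^-1 ... T_n^-1,
   which is diagonal in the seminormal basis with eigenvalue t^c(n+1); the new box has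
   content n - |lambda|. *)

lemma tt_nonzero [simp]: "tt \<noteq> 0"
  by (simp add: tt_def eq_fract Zero_fract_def)

lemma tt_power_eq_1_iff: "tt ^ k = 1 \<longleftrightarrow> k = 0"
proof
  assume "tt ^ k = 1"
  have "tt ^ k = Fract ([:[:0, 1:]:] ^ k) 1"
    by (induct k) (simp_all add: tt_def One_fract_def)
  with \<open>tt ^ k = 1\<close> have "[:[:0, 1:]:] ^ k = (1 :: rat poly poly)"
    by (simp add: One_fract_def eq_fract)
  moreover have "[:[:0, 1:]:] ^ k = [:[:0::rat, 1:] ^ k:]"
    by (induct k) (simp_all add: one_pCons mult.commute)
  ultimately have "[:0::rat, 1:] ^ k = 1"
    by (simp add: one_pCons)
  then have "degree ([:0::rat, 1:] ^ k) = 0"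
    by simp
  then show "k = 0"
    by (simp add: degree_power_eq)
qed simp

lemma tpow_nonzero [simp]: "tpow c \<noteq> 0"
  by (simp add: tpow_def)

lemma tpow_Suc: "tpow (c + 1) = tt * tpow c"
  by (simp add: tpow_def power_int_add_1 mult.commute)

lemma tpow_inj:
  assumes "tpow c = tpow d"
  shows "c = d"
proof -
  have less_impossible: False if "c' < d'" "tpow c' = tpow d'" for c' d'
  proof -
    have "d' = c' + int (nat (d' - c'))"
      using that(1) by simp
    then have "tpow d' = tpow c' * tt ^ nat (d' - c')"
      unfolding tpow_def by (metis power_int_add power_int_of_nat tt_nonzero)
    then show False
      using that tt_power_eq_1_iff[of "nat (d' - c')"] by simp
  qed
  show ?thesis
    using less_impossible[of c d] less_impossible[of d c] assms
    by (cases c d rule: linorder_cases) auto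
qed

section \<open>Young diagrams and standard tableaux\<close>

lemma mem_boxes: "(a, b) \<in> boxes nu \<longleftrightarrow> 1 \<le> a \<and> a \<le> length nu \<and> 1 \<le> b \<and> b \<le> nu ! (a - 1)"
  by (simp add: boxes_def)

lemma boxes_ge_1: "x \<in> boxes nu \<Longrightarrow> 1 \<le> fst x \<and> 1 \<le> snd x"
  by (cases x) (simp add: mem_boxes)

lemma boxes_down_closed:
  assumes "sorted_wrt (\<ge>) nu" "(a', b') \<in> boxes nu" "1 \<le> a" "a \<le> a'" "1 \<le> b" "b \<le> b'"
  shows "(a, b) \<in> boxes nu"
proof -
  have "nu ! (a' - 1) \<le> nu ! (a - 1)"
    using assms(1-4) by (cases "a = a'") (auto simp: mem_boxes sorted_wrt_iff_nth_less)
  then show ?thesis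
    using assms(2-6) by (auto simp: mem_boxes)
qed

lemma finite_boxes: "finite (boxes nu)"
proof (rule finite_subset)
  show "boxes nu \<subseteq> {0..length nu} \<times> {0..sum_list nu}"
  proof
    fix x assume x: "x \<in> boxes nu"
    obtain a b where ab: "x = (a, b)" by force
    have "b \<le> nu ! (a - 1)" "a - 1 < length nu" "a \<le> length nu"
      using x ab by (auto simp: mem_boxes)
    moreover have "nu ! (a - 1) \<le> sum_list nu"
      using elem_le_sum_list calculation(2) by blast
    ultimately show "x \<in> {0..length nu} \<times> {0..sum_list nu}"
      using ab by auto
  qed
qed simp

lemma SYT_bij: "\<tau> \<in> SYT nu \<Longrightarrow> bij_betw \<tau> {1..sum_list nu} (boxes nu)"
  unfolding SYT_def by blast

lemma SYT_outside: "\<tau> \<in> SYT nu \<Longrightarrow> k \<notin> {1..sum_list nu} \<Longrightarrow> \<tau> k = (0, 0)"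
  unfolding SYT_def by blast

lemma SYT_le:
  "\<tau> \<in> SYT nu \<Longrightarrow> i \<in> {1..sum_list nu} \<Longrightarrow> j \<in> {1..sum_list nu} \<Longrightarrow>
   fst (\<tau> i) \<le> fst (\<tau> j) \<Longrightarrow> snd (\<tau> i) \<le> snd (\<tau> j) \<Longrightarrow> i \<le> j"
  unfolding SYT_def by blast

lemma SYT_in_boxes: "\<tau> \<in> SYT nu \<Longrightarrow> i \<in> {1..sum_list nu} \<Longrightarrow> \<tau> i \<in> boxes nu"
  using bij_betwE[OF SYT_bij] by blast

lemma SYT_inj:
  "\<tau> \<in> SYT nu \<Longrightarrow> i \<in> {1..sum_list nu} \<Longrightarrow> j \<in> {1..sum_list nu} \<Longrightarrow> \<tau> i = \<tau> j \<Longrightarrow> i = j"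
  by (rule inj_onD[OF bij_betw_imp_inj_on[OF SYT_bij]])

lemma SYT_surj:
  assumes "\<tau> \<in> SYT nu" "x \<in> boxes nu"
  obtains j where "j \<in> {1..sum_list nu}" "\<tau> j = x"
  using bij_betw_imp_surj_on[OF SYT_bij[OF assms(1)]] assms(2) by (metis imageE)

lemma finite_SYT: "finite (SYT nu)"
proof (rule finite_subset)
  let ?A = "{1..sum_list nu}"
  let ?F = "\<lambda>f::tab. \<lambda>k. if k \<in> ?A then f k else (0, 0)"
  show "SYT nu \<subseteq> ?F ` (PiE ?A (\<lambda>_. boxes nu))"
  proof
    fix \<tau> assume \<tau>: "\<tau> \<in> SYT nu"
    have "\<tau> = ?F (restrict \<tau> ?A)"
      using SYT_outside[OF \<tau>] by (auto simp: fun_eq_iff)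
    moreover have "restrict \<tau> ?A \<in> PiE ?A (\<lambda>_. boxes nu)"
      using SYT_in_boxes[OF \<tau>] by auto
    ultimately show "\<tau> \<in> ?F ` (PiE ?A (\<lambda>_. boxes nu))"
      by blast
  qed
  show "finite (?F ` (PiE ?A (\<lambda>_. boxes nu)))"
    by (intro finite_imageI finite_PiE finite_boxes) simp
qed

lemma SYT_1:
  assumes "\<tau> \<in> SYT nu" "sorted_wrt (\<ge>) nu" "1 \<le> sum_list nu"
  shows "\<tau> 1 = (1, 1)"
proof -
  have one: "1 \<in> {1..sum_list nu}"
    using assms(3) by simp
  then have "(1, 1) \<in> boxes nu"
    using boxes_down_closed[OF assms(2), of _ _ 1 1] boxes_ge_1 SYT_in_boxes[OF assms(1)]
    by (metis order_refl prod.collapse)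
  then obtain j where j: "j \<in> {1..sum_list nu}" "\<tau> j = (1, 1)"
    using SYT_surj[OF assms(1)] by blast
  have "j \<le> 1"
    using SYT_le[OF assms(1) j(1) one] j(2) boxes_ge_1[OF SYT_in_boxes[OF assms(1) one]] by simp
  then show ?thesis
    using j by auto
qed

lemma swap_tab_eq_comp: "swap_tab i \<tau> = \<tau> \<circ> transpose i (Suc i)"
  by (rule ext) (simp add: swap_tab_def transpose_def)

lemma swap_tab_swap_tab [simp]: "swap_tab i (swap_tab i \<tau>) = \<tau>"
  by (rule ext) (simp add: swap_tab_def)

lemma content_swap_tab [simp]:
  "content (swap_tab i \<tau>) i = content \<tau> (Suc i)"
  "content (swap_tab i \<tau>) (Suc i) = content \<tau> i"
  by (simp_all add: content_def swap_tab_def)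

lemma swap_tab_neq:
  assumes "\<tau> \<in> SYT nu" "1 \<le> i" "Suc i \<le> sum_list nu"
  shows "swap_tab i \<tau> \<noteq> \<tau>"
proof
  assume "swap_tab i \<tau> = \<tau>"
  then have "\<tau> (Suc i) = \<tau> i"
    by (metis swap_tab_def)
  from SYT_inj[OF assms(1) _ _ this] assms show False
    by auto
qed

lemma SYT_box_between:
  assumes \<tau>: "\<tau> \<in> SYT nu" and i: "1 \<le> i" "Suc i \<le> sum_list nu"
    and x: "x \<in> boxes nu" "x \<noteq> \<tau> i"
    and le: "fst (\<tau> i) \<le> fst x" "snd (\<tau> i) \<le> snd x" "fst x \<le> fst (\<tau> (Suc i))" "snd x \<le> snd (\<tau> (Suc i))"
  shows "x = \<tau> (Suc i)"
proof -
  have i': "i \<in> {1..sum_list nu}" "Suc i \<in> {1..sum_list nu}"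
    using i by auto
  obtain j where j: "j \<in> {1..sum_list nu}" "\<tau> j = x"
    using SYT_surj[OF \<tau> x(1)] by blast
  have "i \<le> j" "j \<le> Suc i"
    using SYT_le[OF \<tau> i'(1) j(1)] SYT_le[OF \<tau> j(1) i'(2)] le j(2) by auto
  then show ?thesis
    using x(2) j(2) by (auto simp: le_Suc_eq)
qed

text \<open>Were i and i+1 on one diagonal, the corner of the rectangle they span would carry a label
  strictly between them.\<close>

lemma content_Suc_neq:
  assumes \<tau>: "\<tau> \<in> SYT nu" and i: "1 \<le> i" "Suc i \<le> sum_list nu"
  shows "content \<tau> i \<noteq> content \<tau> (Suc i)"
proof
  assume same: "content \<tau> i = content \<tau> (Suc i)"
  obtain a b where ab: "\<tau> i = (a, b)" by force
  obtain a2 b2 where ab2: "\<tau> (Suc i) = (a2, b2)" by force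
  have i': "i \<in> {1..sum_list nu}" "Suc i \<in> {1..sum_list nu}"
    using i by auto
  have ne: "(a, b) \<noteq> (a2, b2)"
    using SYT_inj[OF \<tau> i'] ab ab2 by auto
  have diag: "int b - int a = int b2 - int a2"
    using same ab ab2 by (simp add: content_def)
  show False
  proof (cases "a < a2")
    case True
    then have "b < b2"
      using diag by linarith
    have "(a2, b) \<in> boxes nu"
      using SYT_in_boxes[OF \<tau> i'(2)] SYT_in_boxes[OF \<tau> i'(1)] ab ab2 \<open>b < b2\<close>
      by (simp add: mem_boxes)
    then have "(a2, b) = \<tau> (Suc i)"
      using SYT_box_between[OF \<tau> i] ab ab2 True \<open>b < b2\<close> by simp
    then show False
      using ab2 \<open>b < b2\<close> by simp
  next
    case False
    then have "a2 < a"
      using ne diag by (cases "a = a2") auto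
    moreover have "b2 < b"
      using diag calculation by linarith
    ultimately show False
      using SYT_le[OF \<tau> i'(2) i'(1)] ab ab2 by simp
  qed
qed

lemma swap_tab_not_SYT_le:
  assumes \<tau>: "\<tau> \<in> SYT nu" and i: "1 \<le> i" "Suc i \<le> sum_list nu"
    and not_SYT: "swap_tab i \<tau> \<notin> SYT nu"
  shows "fst (\<tau> i) \<le> fst (\<tau> (Suc i)) \<and> snd (\<tau> i) \<le> snd (\<tau> (Suc i))"
proof -
  let ?m = "sum_list nu" and ?s = "transpose i (Suc i)"
  have i': "i \<in> {1..?m}" "Suc i \<in> {1..?m}"
    using i by auto
  have "bij_betw (swap_tab i \<tau>) {1..?m} (boxes nu)"
    unfolding swap_tab_eq_comp using i'
    by (intro bij_betw_trans[OF _ SYT_bij[OF \<tau>]] bij_betw_transpose_iff) auto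
  moreover have "\<forall>k. k \<notin> {1..?m} \<longrightarrow> swap_tab i \<tau> k = (0, 0)"
    using SYT_outside[OF \<tau>] i' by (auto simp: swap_tab_def)
  ultimately obtain j k where jk: "j \<in> {1..?m}" "k \<in> {1..?m}"
    "fst (\<tau> (?s j)) \<le> fst (\<tau> (?s k))" "snd (\<tau> (?s j)) \<le> snd (\<tau> (?s k))" "\<not> j \<le> k"
    using not_SYT unfolding SYT_def swap_tab_eq_comp by auto
  have "?s j \<in> {1..?m}" "?s k \<in> {1..?m}"
    using jk(1,2) i' by (auto simp: transpose_def)
  then have "?s j \<le> ?s k"
    using SYT_le[OF \<tau>] jk(3,4) by blast
  then have "j = Suc i" "k = i"
    using jk(5) by (auto simp: transpose_def split: if_splits)
  then show ?thesis
    using jk(3,4) by simp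
qed

lemma swap_tab_not_SYT:
  assumes \<tau>: "\<tau> \<in> SYT nu" and nu: "sorted_wrt (\<ge>) nu" and i: "1 \<le> i" "Suc i \<le> sum_list nu"
    and not_SYT: "swap_tab i \<tau> \<notin> SYT nu"
  shows "\<tau> (Suc i) = (fst (\<tau> i), Suc (snd (\<tau> i))) \<or> \<tau> (Suc i) = (Suc (fst (\<tau> i)), snd (\<tau> i))"
proof -
  obtain a b where ab: "\<tau> i = (a, b)" by force
  obtain a2 b2 where ab2: "\<tau> (Suc i) = (a2, b2)" by force
  have i': "i \<in> {1..sum_list nu}" "Suc i \<in> {1..sum_list nu}"
    using i by auto
  have le: "a \<le> a2" "b \<le> b2"
    using swap_tab_not_SYT_le[OF \<tau> i not_SYT] ab ab2 by simp_all
  have ne: "(a, b) \<noteq> (a2, b2)"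
    using SYT_inj[OF \<tau> i'] ab ab2 by auto
  have box2: "(a2, b2) \<in> boxes nu" and ge1: "1 \<le> a" "1 \<le> b"
    using SYT_in_boxes[OF \<tau> i'(2)] ab2 boxes_ge_1[OF SYT_in_boxes[OF \<tau> i'(1)]] ab by auto
  show ?thesis
  proof (cases "b < b2")
    case True
    have "(a, Suc b) \<in> boxes nu"
      using boxes_down_closed[OF nu box2, of a "Suc b"] le True ge1 by simp
    then have "(a, Suc b) = \<tau> (Suc i)"
      using SYT_box_between[OF \<tau> i] ab ab2 le True by simp
    then show ?thesis
      using ab by simp
  next
    case False
    then have "b = b2" "a < a2"
      using le ne by auto
    have "(Suc a, b) \<in> boxes nu"
      using boxes_down_closed[OF nu box2, of "Suc a" b] le \<open>a < a2\<close> ge1 by simp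
    then have "(Suc a, b) = \<tau> (Suc i)"
      using SYT_box_between[OF \<tau> i] ab ab2 le \<open>b = b2\<close> \<open>a < a2\<close> by simp
    then show ?thesis
      using ab by simp
  qed
qed

section \<open>The seminormal representation\<close>

text \<open>On the span of e_tau and e_(s_i tau) the seminormal T_i has diagonal entries p, p' and
  off-diagonal entries r, s, where a = t^c_tau(i) and b = t^c_tau(i+1).\<close>

lemma block_quadratic:
  fixes a b t p p' r s x y :: "'a::field"
  assumes "a \<noteq> b" "p = (1 - t) * a / (a - b)" "p' = (1 - t) * b / (b - a)"
    and "r * s = (t * a - b) * (a - t * b) / (a - b)^2"
  shows "p * (p * x + r * y) + r * (p' * y + s * x) = (1 - t) * (p * x + r * y) + t * x"
proof -
  have ab: "a - b \<noteq> 0" "b - a \<noteq> 0"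
    using assms(1) by auto
  have hp: "p * (a - b) = (1 - t) * a" and hp': "p' * (b - a) = (1 - t) * b"
    and hrs: "r * s * (a - b)^2 = (t * a - b) * (a - t * b)"
    using ab assms(2-4) by simp_all
  have e1: "p + p' = 1 - t" and e2: "p * p + r * s = (1 - t) * p + t"
    using hp hp' hrs ab by algebra+
  have "p * (p * x + r * y) + r * (p' * y + s * x) = (p * p + r * s) * x + r * (p + p') * y"
    by (simp add: algebra_simps)
  also have "\<dots> = (1 - t) * (p * x + r * y) + t * x"
    unfolding e1 e2 by (simp add: algebra_simps)
  finally show ?thesis .
qed

lemma diag_entry_cases:
  fixes a b t p :: "'a::field"
  assumes "a \<noteq> b" "a \<noteq> 0" "p = (1 - t) * a / (a - b)" "b = t * a \<or> a = t * b"
  shows "p = 1 \<and> b = t * a \<or> p = - t \<and> a = t * b"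
proof -
  have ab: "a - b \<noteq> 0"
    using assms(1) by auto
  have "p * (a - b) = (1 - t) * a"
    using ab assms(3) by simp
  then show ?thesis
    using assms(2,4) ab by algebra
qed

lemma block_theta:
  fixes a b t p p' r s x y :: "'a::field"
  assumes "a \<noteq> b" "t \<noteq> 0" "p = (1 - t) * a / (a - b)" "p' = (1 - t) * b / (b - a)"
    and "r * s = (t * a - b) * (a - t * b) / (a - b)^2"
  shows "t * (((p + (t - 1)) * (a * (((p + (t - 1)) * x + r * y) / t))
               + r * (b * (((p' + (t - 1)) * y + s * x) / t))) / t) = b * x"
proof -
  have ab: "a - b \<noteq> 0" "b - a \<noteq> 0"
    using assms(1) by auto
  have hp: "p * (a - b) = (1 - t) * a" and hp': "p' * (b - a) = (1 - t) * b"
    and hrs: "r * s * (a - b)^2 = (t * a - b) * (a - t * b)"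
    using ab assms(3-5) by simp_all
  have q1: "p + (t - 1) = - p'" and q2: "p' + (t - 1) = - p"
    and z: "p' * a + p * b = 0" and w: "p' * p' * a + (r * s) * b = t * b"
    using hp hp' hrs ab by algebra+
  show ?thesis
    unfolding q1 q2 using assms(2) z w by (simp add: field_simps) algebra
qed

definition offdiag_weight :: "K \<Rightarrow> K \<Rightarrow> K" where
  "offdiag_weight a b = (tt * a - b) * (a - tt * b) / (a - b)^2"

lemma offdiag_weight_commute: "offdiag_weight b a = offdiag_weight a b"
  unfolding offdiag_weight_def by (simp add: power2_eq_square algebra_simps)

lemma Tcoef_diag:
  "Tcoef nu i \<tau> \<tau> = (1 - tt) * tpow (content \<tau> i) / (tpow (content \<tau> i) - tpow (content \<tau> (Suc i)))"
  by (simp add: Tcoef_def Let_def)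

lemma Tcoef_eq_0:
  assumes "\<sigma> \<noteq> \<tau>" "\<sigma> \<noteq> swap_tab i \<tau>"
  shows "Tcoef nu i \<sigma> \<tau> = 0"
proof -
  have "\<tau> \<noteq> swap_tab i \<sigma>"
    using assms(2) by auto
  then show ?thesis
    using assms(1) by (simp add: Tcoef_def Let_def)
qed

lemma Tcoef_swap:
  assumes "swap_tab i \<tau> \<noteq> \<tau>" "\<tau> \<in> SYT nu"
  shows "Tcoef nu i (swap_tab i \<tau>) \<tau> =
    (if content \<tau> (Suc i) - content \<tau> i > 1 then 1
     else offdiag_weight (tpow (content \<tau> i)) (tpow (content \<tau> (Suc i))))"
  using assms offdiag_weight_commute by (simp add: Tcoef_def Let_def offdiag_weight_def)

lemma tpow_content_Suc_neq:
  "\<tau> \<in> SYT nu \<Longrightarrow> 1 \<le> i \<Longrightarrow> Suc i \<le> sum_list nu \<Longrightarrow>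
   tpow (content \<tau> i) \<noteq> tpow (content \<tau> (Suc i))"
  using content_Suc_neq tpow_inj by blast

lemma Tcoef_diag_not_swap:
  assumes \<tau>: "\<tau> \<in> SYT nu" and nu: "sorted_wrt (\<ge>) nu" and i: "1 \<le> i" "Suc i \<le> sum_list nu"
    and not_SYT: "swap_tab i \<tau> \<notin> SYT nu"
  shows "Tcoef nu i \<tau> \<tau> = 1 \<and> tpow (content \<tau> (Suc i)) = tt * tpow (content \<tau> i) \<or>
         Tcoef nu i \<tau> \<tau> = - tt \<and> tpow (content \<tau> i) = tt * tpow (content \<tau> (Suc i))"
proof -
  have "content \<tau> (Suc i) = content \<tau> i + 1 \<or> content \<tau> i = content \<tau> (Suc i) + 1"
    using swap_tab_not_SYT[OF \<tau> nu i not_SYT] by (auto simp: content_def)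
  then have "tpow (content \<tau> (Suc i)) = tt * tpow (content \<tau> i) \<or>
      tpow (content \<tau> i) = tt * tpow (content \<tau> (Suc i))"
    by (metis tpow_Suc)
  then show ?thesis
    using diag_entry_cases[OF tpow_content_Suc_neq[OF \<tau> i] tpow_nonzero Tcoef_diag] by blast
qed

text \<open>At most one of the two off-diagonal entries differs from 1, and the weight vanishes when
  the contents are adjacent.\<close>

lemma Tcoef_swap_mult:
  assumes \<tau>: "\<tau> \<in> SYT nu" and i: "1 \<le> i" "Suc i \<le> sum_list nu" and s: "swap_tab i \<tau> \<in> SYT nu"
  shows "Tcoef nu i (swap_tab i \<tau>) \<tau> * Tcoef nu i \<tau> (swap_tab i \<tau>) =
    offdiag_weight (tpow (content \<tau> i)) (tpow (content \<tau> (Suc i)))"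
proof -
  let ?c1 = "content \<tau> i" and ?c2 = "content \<tau> (Suc i)"
  let ?a = "tpow ?c1" and ?b = "tpow ?c2"
  have ne: "swap_tab i \<tau> \<noteq> \<tau>"
    using swap_tab_neq[OF \<tau> i] .
  have r: "Tcoef nu i (swap_tab i \<tau>) \<tau> = (if ?c2 - ?c1 > 1 then 1 else offdiag_weight ?a ?b)"
    using Tcoef_swap[OF ne \<tau>] .
  have s': "Tcoef nu i \<tau> (swap_tab i \<tau>) = (if ?c1 - ?c2 > 1 then 1 else offdiag_weight ?a ?b)"
    using Tcoef_swap[of i "swap_tab i \<tau>" nu] ne s by (simp add: offdiag_weight_commute)
  have "offdiag_weight ?a ?b = 0" if "\<not> ?c2 - ?c1 > 1" "\<not> ?c1 - ?c2 > 1"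
  proof -
    have "?c2 = ?c1 + 1 \<or> ?c1 = ?c2 + 1"
      using that content_Suc_neq[OF \<tau> i] by linarith
    then have "?b = tt * ?a \<or> ?a = tt * ?b"
      by (metis tpow_Suc)
    then show ?thesis
      unfolding offdiag_weight_def by auto
  qed
  then show ?thesis
    using r s' content_Suc_neq[OF \<tau> i] by auto
qed

lemma Tcoef_not_SYT: "\<tau> \<notin> SYT nu \<Longrightarrow> \<sigma> \<in> SYT nu \<Longrightarrow> Tcoef nu i \<sigma> \<tau> = 0"
  by (auto simp: Tcoef_def Let_def)

lemma ST_not_SYT: "\<tau> \<notin> SYT nu \<Longrightarrow> ST nu i g \<tau> = 0"
  unfolding ST_def by (rule sum.neutral) (simp add: Tcoef_not_SYT)

lemma ST_eq:
  assumes \<tau>: "\<tau> \<in> SYT nu" and i: "1 \<le> i" "Suc i \<le> sum_list nu"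
  shows "ST nu i g \<tau> = Tcoef nu i \<tau> \<tau> * g \<tau> +
    (if swap_tab i \<tau> \<in> SYT nu then Tcoef nu i (swap_tab i \<tau>) \<tau> * g (swap_tab i \<tau>) else 0)"
proof -
  let ?F = "\<lambda>\<sigma>. Tcoef nu i \<sigma> \<tau> * g \<sigma>"
  let ?B = "SYT nu \<inter> {\<tau>, swap_tab i \<tau>}"
  have "ST nu i g \<tau> = sum ?F ?B"
    unfolding ST_def by (rule sum.mono_neutral_right) (auto simp: finite_SYT Tcoef_eq_0)
  also have "\<dots> = ?F \<tau> + (if swap_tab i \<tau> \<in> SYT nu then ?F (swap_tab i \<tau>) else 0)"
    using \<tau> swap_tab_neq[OF \<tau> i] by (cases "swap_tab i \<tau> \<in> SYT nu") (simp_all add: insert_absorb)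
  finally show ?thesis .
qed

lemma STinv_eq:
  assumes "\<tau> \<in> SYT nu" "1 \<le> i" "Suc i \<le> sum_list nu"
  shows "STinv nu i g \<tau> = ((Tcoef nu i \<tau> \<tau> + (tt - 1)) * g \<tau> +
    (if swap_tab i \<tau> \<in> SYT nu then Tcoef nu i (swap_tab i \<tau>) \<tau> * g (swap_tab i \<tau>) else 0)) / tt"
  unfolding STinv_def ST_eq[OF assms] by (simp add: distrib_right)

definition SYT_supported :: "nat list \<Rightarrow> svec \<Rightarrow> bool" where
  "SYT_supported nu g \<longleftrightarrow> (\<forall>\<sigma>. \<sigma> \<notin> SYT nu \<longrightarrow> g \<sigma> = 0)"

lemma SYT_supported_STinv: "SYT_supported nu g \<Longrightarrow> SYT_supported nu (STinv nu i g)"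
  by (simp add: SYT_supported_def STinv_def ST_not_SYT)

lemma ST_quadratic:
  assumes nu: "sorted_wrt (\<ge>) nu" and g: "SYT_supported nu g"
    and i: "1 \<le> i" "Suc i \<le> sum_list nu"
  shows "ST nu i (ST nu i g) \<tau> = (1 - tt) * ST nu i g \<tau> + tt * g \<tau>"
proof (cases "\<tau> \<in> SYT nu")
  case False
  then show ?thesis
    using g by (simp add: ST_not_SYT SYT_supported_def)
next
  case \<tau>: True
  let ?s = "swap_tab i \<tau>"
  show ?thesis
  proof (cases "?s \<in> SYT nu")
    case s: True
    have e1: "ST nu i g \<tau> = Tcoef nu i \<tau> \<tau> * g \<tau> + Tcoef nu i ?s \<tau> * g ?s"
      and e2: "ST nu i (ST nu i g) \<tau> = Tcoef nu i \<tau> \<tau> * ST nu i g \<tau> + Tcoef nu i ?s \<tau> * ST nu i g ?s"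
      and e3: "ST nu i g ?s = Tcoef nu i ?s ?s * g ?s + Tcoef nu i \<tau> ?s * g \<tau>"
      using ST_eq[OF \<tau> i] ST_eq[OF s i] s \<tau> by simp_all
    show ?thesis
      unfolding e2 e1 e3
      by (rule block_quadratic[OF tpow_content_Suc_neq[OF \<tau> i] Tcoef_diag
            Tcoef_diag[of nu i ?s, simplified] Tcoef_swap_mult[OF \<tau> i s, unfolded offdiag_weight_def]])
  next
    case s: False
    have "ST nu i g \<tau> = Tcoef nu i \<tau> \<tau> * g \<tau>"
      and "ST nu i (ST nu i g) \<tau> = Tcoef nu i \<tau> \<tau> * ST nu i g \<tau>"
      using ST_eq[OF \<tau> i] s by simp_all
    then show ?thesis
      using Tcoef_diag_not_swap[OF \<tau> nu i s] by (auto simp: algebra_simps)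
  qed
qed

lemma STinv_ST:
  assumes "sorted_wrt (\<ge>) nu" "SYT_supported nu g" "1 \<le> i" "Suc i \<le> sum_list nu"
  shows "STinv nu i (ST nu i g) = g"
  by (rule ext) (simp add: STinv_def ST_quadratic[OF assms] field_simps)

text \<open>The recursion theta_(i+1) = t T_i^-1 theta_i T_i^-1 on a single block.\<close>

lemma STinv_tpow_STinv:
  assumes nu: "sorted_wrt (\<ge>) nu" and \<tau>: "\<tau> \<in> SYT nu" and i: "1 \<le> i" "Suc i \<le> sum_list nu"
  shows "tt * STinv nu i (\<lambda>\<sigma>. tpow (content \<sigma> i) * STinv nu i g \<sigma>) \<tau> =
    tpow (content \<tau> (Suc i)) * g \<tau>"
proof -
  let ?s = "swap_tab i \<tau>"
  let ?h = "\<lambda>\<sigma>. tpow (content \<sigma> i) * STinv nu i g \<sigma>"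
  show ?thesis
  proof (cases "?s \<in> SYT nu")
    case s: True
    have e1: "STinv nu i g \<tau> = ((Tcoef nu i \<tau> \<tau> + (tt - 1)) * g \<tau> + Tcoef nu i ?s \<tau> * g ?s) / tt"
      and e2: "STinv nu i ?h \<tau> = ((Tcoef nu i \<tau> \<tau> + (tt - 1)) * (tpow (content \<tau> i) * STinv nu i g \<tau>)
                 + Tcoef nu i ?s \<tau> * (tpow (content \<tau> (Suc i)) * STinv nu i g ?s)) / tt"
      and e3: "STinv nu i g ?s = ((Tcoef nu i ?s ?s + (tt - 1)) * g ?s + Tcoef nu i \<tau> ?s * g \<tau>) / tt"
      using STinv_eq[OF \<tau> i] STinv_eq[OF s i] s \<tau> by simp_all
    show ?thesis
      unfolding e2 e1 e3
      by (rule block_theta[OF tpow_content_Suc_neq[OF \<tau> i] tt_nonzero Tcoef_diag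
            Tcoef_diag[of nu i ?s, simplified] Tcoef_swap_mult[OF \<tau> i s, unfolded offdiag_weight_def]])
  next
    case s: False
    have e1: "STinv nu i g \<tau> = (Tcoef nu i \<tau> \<tau> + (tt - 1)) * g \<tau> / tt"
      and e2: "STinv nu i ?h \<tau> = (Tcoef nu i \<tau> \<tau> + (tt - 1)) * (tpow (content \<tau> i) * STinv nu i g \<tau>) / tt"
      using STinv_eq[OF \<tau> i] s by simp_all
    show ?thesis
      unfolding e2 e1 using Tcoef_diag_not_swap[OF \<tau> nu i s] by (auto simp: field_simps)
  qed
qed

fun STinv_downto :: "nat list \<Rightarrow> nat \<Rightarrow> svec \<Rightarrow> svec" where
  "STinv_downto nu 0 g = g"
| "STinv_downto nu (Suc k) g = STinv nu (Suc k) (STinv_downto nu k g)"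

definition STinv_upto :: "nat list \<Rightarrow> nat \<Rightarrow> svec \<Rightarrow> svec" where
  "STinv_upto nu k g = foldr (STinv nu) [1..<Suc k] g"

lemma STinv_upto_0 [simp]: "STinv_upto nu 0 g = g"
  by (simp add: STinv_upto_def)

lemma STinv_upto_Suc: "STinv_upto nu (Suc k) g = STinv_upto nu k (STinv nu (Suc k) g)"
  by (simp add: STinv_upto_def)

lemma SYT_supported_STinv_downto: "SYT_supported nu g \<Longrightarrow> SYT_supported nu (STinv_downto nu k g)"
  by (induct k) (simp_all add: SYT_supported_STinv)

lemma SYT_supported_STinv_upto: "SYT_supported nu g \<Longrightarrow> SYT_supported nu (STinv_upto nu k g)"
  by (induct k arbitrary: g) (simp_all add: STinv_upto_Suc SYT_supported_STinv)

lemma STinv_mult: "STinv nu i (\<lambda>\<sigma>. c * g \<sigma>) \<tau> = c * STinv nu i g \<tau>"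
  by (simp add: STinv_def ST_def sum_distrib_left algebra_simps)

lemma STinv_divide: "STinv nu i (\<lambda>\<sigma>. g \<sigma> / c) \<tau> = STinv nu i g \<tau> / c"
  using STinv_mult[of nu i "1 / c" g \<tau>] by simp

lemma STinv_downto_mult: "STinv_downto nu k (\<lambda>\<sigma>. c * g \<sigma>) \<tau> = c * STinv_downto nu k g \<tau>"
proof (induct k arbitrary: \<tau>)
  case (Suc k)
  then have "STinv_downto nu k (\<lambda>\<sigma>. c * g \<sigma>) = (\<lambda>\<tau>. c * STinv_downto nu k g \<tau>)"
    by (rule ext)
  then show ?case
    by (simp add: STinv_mult)
qed simp

lemma STinv_upto_mult: "STinv_upto nu k (\<lambda>\<sigma>. c * g \<sigma>) \<tau> = c * STinv_upto nu k g \<tau>"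
proof (induct k arbitrary: g \<tau>)
  case (Suc k)
  have "STinv nu (Suc k) (\<lambda>\<sigma>. c * g \<sigma>) = (\<lambda>\<tau>. c * STinv nu (Suc k) g \<tau>)"
    by (rule ext) (rule STinv_mult)
  then show ?case
    by (simp add: STinv_upto_Suc Suc)
qed simp

text \<open>The seminormal basis diagonalises the Jucys-Murphy elements
  theta_(k+1) = t^k T_k^-1 ... T_1^-1 theta_1 T_1^-1 ... T_k^-1, where theta_1 acts as 1 on S.\<close>

lemma STinv_downto_upto:
  assumes nu: "sorted_wrt (\<ge>) nu" and "SYT_supported nu g" "Suc k \<le> sum_list nu" "\<tau> \<in> SYT nu"
  shows "tt ^ k * STinv_downto nu k (STinv_upto nu k g) \<tau> = tpow (content \<tau> (Suc k)) * g \<tau>"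
  using assms(2-)
proof (induct k arbitrary: g \<tau>)
  case 0
  have "\<tau> 1 = (1, 1)"
    using SYT_1[OF "0.prems"(3) nu] "0.prems"(2) by simp
  then show ?case
    by (simp add: content_def tpow_def)
next
  case (Suc k)
  let ?g = "STinv nu (Suc k) g"
  have "STinv_downto nu k (STinv_upto nu k ?g) \<sigma> = tpow (content \<sigma> (Suc k)) * ?g \<sigma> / tt ^ k"
    for \<sigma>
  proof (cases "\<sigma> \<in> SYT nu")
    case True
    then show ?thesis
      using Suc.hyps[OF SYT_supported_STinv[OF Suc.prems(1)] _ True] Suc.prems(2)
      by (simp add: field_simps)
  next
    case False
    have "SYT_supported nu (STinv_downto nu k (STinv_upto nu k ?g))" "SYT_supported nu ?g"
      using Suc.prems(1)
      by (simp_all add: SYT_supported_STinv SYT_supported_STinv_upto SYT_supported_STinv_downto)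
    then show ?thesis
      using False by (simp add: SYT_supported_def)
  qed
  then have "STinv_downto nu k (STinv_upto nu k ?g) = (\<lambda>\<sigma>. tpow (content \<sigma> (Suc k)) * ?g \<sigma> / tt ^ k)"
    by (rule ext)
  then have "tt ^ Suc k * STinv_downto nu (Suc k) (STinv_upto nu (Suc k) g) \<tau>
      = tt * STinv nu (Suc k) (\<lambda>\<sigma>. tpow (content \<sigma> (Suc k)) * ?g \<sigma>) \<tau>"
    by (simp add: STinv_upto_Suc STinv_divide)
  also have "\<dots> = tpow (content \<tau> (Suc (Suc k))) * g \<tau>"
    using Suc.prems by (intro STinv_tpow_STinv[OF nu]) simp_all
  finally show ?case .
qed

lemma ST_sum: "ST nu i (\<lambda>\<rho>. \<Sum>\<sigma>\<in>A. c \<sigma> * F \<sigma> \<rho>) \<tau> = (\<Sum>\<sigma>\<in>A. c \<sigma> * ST nu i (F \<sigma>) \<tau>)"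
  unfolding ST_def sum_distrib_left by (subst sum.swap) (simp add: algebra_simps)

lemma STinv_sum: "STinv nu i (\<lambda>\<rho>. \<Sum>\<sigma>\<in>A. c \<sigma> * F \<sigma> \<rho>) \<tau> = (\<Sum>\<sigma>\<in>A. c \<sigma> * STinv nu i (F \<sigma>) \<tau>)"
proof -
  have "c \<sigma> * STinv nu i (F \<sigma>) \<tau> = (c \<sigma> * ST nu i (F \<sigma>) \<tau> + (tt - 1) * (c \<sigma> * F \<sigma> \<tau>)) / tt" for \<sigma>
    by (simp add: STinv_def field_simps)
  then show ?thesis
    by (simp add: STinv_def ST_sum sum_divide_distrib[symmetric] sum.distrib sum_distrib_left)
qed

lemma foldr_STinv_sum:
  "foldr (STinv nu) l (\<lambda>\<rho>. \<Sum>\<sigma>\<in>A. c \<sigma> * F \<sigma> \<rho>) \<tau> = (\<Sum>\<sigma>\<in>A. c \<sigma> * foldr (STinv nu) l (F \<sigma>) \<tau>)"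
proof (induct l arbitrary: \<tau>)
  case (Cons a l)
  then have "foldr (STinv nu) l (\<lambda>\<rho>. \<Sum>\<sigma>\<in>A. c \<sigma> * F \<sigma> \<rho>) =
      (\<lambda>\<tau>. \<Sum>\<sigma>\<in>A. c \<sigma> * foldr (STinv nu) l (F \<sigma>) \<tau>)"
    by (rule ext)
  then show ?case
    by (simp add: STinv_sum)
qed simp

lemma SYT_supported_expand:
  "SYT_supported nu g \<Longrightarrow> g = (\<lambda>\<rho>. \<Sum>\<sigma>\<in>SYT nu. g \<sigma> * (if \<rho> = \<sigma> then 1 else 0))"
  by (rule ext) (auto simp: SYT_supported_def finite_SYT if_distrib[of "(*) _"] sum.delta' cong: if_cong)

lemma Pbar_expand:
  assumes "SYT_supported nu g"
  shows "Pbar nu g \<tau> = (\<Sum>\<sigma>\<in>SYT nu. g \<sigma> * Pbar nu (\<lambda>\<rho>. if \<rho> = \<sigma> then 1 else 0) \<tau>)"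
  by (subst SYT_supported_expand[OF assms])
     (simp add: Pbar_def foldr_STinv_sum sum_distrib_left algebra_simps)

lemma Pbar_eq_STinv_upto: "sum_list nu = Suc k \<Longrightarrow> Pbar nu g = (\<lambda>\<tau>. tt ^ k * STinv_upto nu k g \<tau>)"
  by (rule ext) (simp add: Pbar_def STinv_upto_def)

lemma SYT_supported_Pbar: "sum_list nu = Suc k \<Longrightarrow> SYT_supported nu g \<Longrightarrow> SYT_supported nu (Pbar nu g)"
  using SYT_supported_STinv_upto by (simp add: Pbar_eq_STinv_upto SYT_supported_def)

section \<open>Polynomials and divided differences\<close>

definition fin_supp :: "mpol \<Rightarrow> bool" where
  "fin_supp f \<longleftrightarrow> finite {\<alpha>. f \<alpha> \<noteq> 0}"

definition Xpow :: "(nat \<Rightarrow> nat) \<Rightarrow> mpol" where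
  "Xpow \<beta> = (\<lambda>\<alpha>. if \<alpha> = \<beta> then 1 else 0)"

definition mult_diff :: "nat \<Rightarrow> mpol \<Rightarrow> mpol" where
  "mult_diff i h = (\<lambda>\<alpha>. pX (Suc i) h \<alpha> - pX i h \<alpha>)"

lemma comp_transpose_transpose [simp]: "f \<circ> transpose a b \<circ> transpose a b = f"
  by (simp add: comp_assoc)

lemma psw_apply: "psw i f \<alpha> = f (\<alpha> \<circ> transpose i (Suc i))"
  unfolding psw_def by (rule arg_cong[where f = f]) (auto simp: fun_eq_iff transpose_def)

lemma psw_psw [simp]: "psw i (psw i f) = f"
  by (rule ext) (simp add: psw_apply)

lemma fin_supp_0 [simp]: "fin_supp (\<lambda>_. 0)"
  by (simp add: fin_supp_def)

lemma fin_supp_lin: "fin_supp f \<Longrightarrow> fin_supp g \<Longrightarrow> fin_supp (\<lambda>\<alpha>. c * f \<alpha> + d * g \<alpha>)"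
  unfolding fin_supp_def by (rule finite_subset[of _ "{\<alpha>. f \<alpha> \<noteq> 0} \<union> {\<alpha>. g \<alpha> \<noteq> 0}"]) auto

lemma fin_supp_mult: "fin_supp f \<Longrightarrow> fin_supp (\<lambda>\<alpha>. c * f \<alpha>)"
  using fin_supp_lin[of f f c 0] by simp

lemma fin_supp_sum:
  "(\<And>a. a \<in> A \<Longrightarrow> fin_supp (F a)) \<Longrightarrow> fin_supp (\<lambda>\<alpha>. \<Sum>a\<in>A. F a \<alpha>)"
proof (induct A rule: infinite_finite_induct)
  case (insert x A)
  then show ?case
    using fin_supp_lin[of "F x" "\<lambda>\<alpha>. \<Sum>a\<in>A. F a \<alpha>" 1 1] by simp
qed simp_all

lemma fin_supp_Xpow: "fin_supp (Xpow \<beta>)"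
  unfolding fin_supp_def Xpow_def by (rule finite_subset[of _ "{\<beta>}"]) auto

lemma fin_supp_pX: "fin_supp h \<Longrightarrow> fin_supp (pX j h)"
  unfolding fin_supp_def
proof (rule finite_subset[of _ "(\<lambda>\<beta>. \<beta>(j := Suc (\<beta> j))) ` {\<alpha>. h \<alpha> \<noteq> 0}"])
  show "{\<alpha>. pX j h \<alpha> \<noteq> 0} \<subseteq> (\<lambda>\<beta>. \<beta>(j := Suc (\<beta> j))) ` {\<alpha>. h \<alpha> \<noteq> 0}"
  proof
    fix \<alpha> assume "\<alpha> \<in> {\<alpha>. pX j h \<alpha> \<noteq> 0}"
    then have "\<alpha> j \<noteq> 0" "h (\<alpha>(j := \<alpha> j - 1)) \<noteq> 0"
      by (auto simp: pX_def split: if_splits)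
    moreover have "\<alpha> = (\<alpha>(j := \<alpha> j - 1))(j := Suc ((\<alpha>(j := \<alpha> j - 1)) j))"
      using calculation(1) by (auto simp: fun_eq_iff)
    ultimately show "\<alpha> \<in> (\<lambda>\<beta>. \<beta>(j := Suc (\<beta> j))) ` {\<alpha>. h \<alpha> \<noteq> 0}"
      by blast
  qed
qed simp

lemma fin_supp_psw: "fin_supp f \<Longrightarrow> fin_supp (psw i f)"
  unfolding fin_supp_def
proof (rule finite_subset[of _ "(\<lambda>\<alpha>. \<alpha> \<circ> transpose i (Suc i)) ` {\<alpha>. f \<alpha> \<noteq> 0}"])
  show "{\<alpha>. psw i f \<alpha> \<noteq> 0} \<subseteq> (\<lambda>\<alpha>. \<alpha> \<circ> transpose i (Suc i)) ` {\<alpha>. f \<alpha> \<noteq> 0}"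
    by (auto simp: psw_apply intro!: image_eqI[of _ _ "_ \<circ> transpose i (Suc i)"])
qed simp

lemma pX_0 [simp]: "pX j (\<lambda>_. 0) = (\<lambda>_. 0)"
  by (rule ext) (simp add: pX_def)

lemma pX_lin: "pX j (\<lambda>\<alpha>. c * f \<alpha> + d * g \<alpha>) = (\<lambda>\<alpha>. c * pX j f \<alpha> + d * pX j g \<alpha>)"
  by (rule ext) (simp add: pX_def)

lemma pX_mult: "pX j (\<lambda>\<alpha>. c * f \<alpha>) = (\<lambda>\<alpha>. c * pX j f \<alpha>)"
  by (rule ext) (simp add: pX_def)

lemma pX_Xpow: "pX j (Xpow \<gamma>) = Xpow (\<gamma>(j := Suc (\<gamma> j)))"
proof
  fix \<alpha>
  show "pX j (Xpow \<gamma>) \<alpha> = Xpow (\<gamma>(j := Suc (\<gamma> j))) \<alpha>"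
  proof (cases "\<alpha> = \<gamma>(j := Suc (\<gamma> j))")
    case True
    then show ?thesis
      by (simp add: pX_def Xpow_def)
  next
    case False
    have "\<alpha>(j := \<alpha> j - 1) \<noteq> \<gamma>" if "\<alpha> j \<noteq> 0"
    proof
      assume "\<alpha>(j := \<alpha> j - 1) = \<gamma>"
      then have "\<alpha> = \<gamma>(j := Suc (\<gamma> j))"
        using that by (auto simp: fun_eq_iff split: if_splits)
      then show False
        using False by simp
    qed
    then show ?thesis
      using False by (auto simp: pX_def Xpow_def)
  qed
qed

lemma mult_diff_lin:
  "mult_diff i (\<lambda>\<alpha>. c * f \<alpha> + d * g \<alpha>) = (\<lambda>\<alpha>. c * mult_diff i f \<alpha> + d * mult_diff i g \<alpha>)"
  by (rule ext) (simp add: mult_diff_def pX_def algebra_simps)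

text \<open>Compare coefficients at X_(i+1) times a monomial of h of maximal X_(i+1)-degree.\<close>

lemma mult_diff_eq_0:
  assumes h: "fin_supp h" and z: "mult_diff i h = (\<lambda>_. 0)"
  shows "h = (\<lambda>_. 0)"
proof (rule ccontr)
  assume "h \<noteq> (\<lambda>_. 0)"
  let ?S = "{\<alpha>. h \<alpha> \<noteq> 0}"
  let ?M = "Max ((\<lambda>\<alpha>. \<alpha> (Suc i)) ` ?S)"
  have fin: "finite ?S" and "?S \<noteq> {}"
    using h \<open>h \<noteq> (\<lambda>_. 0)\<close> by (auto simp: fin_supp_def)
  then have "?M \<in> (\<lambda>\<alpha>. \<alpha> (Suc i)) ` ?S"
    by (intro Max_in) auto
  then obtain \<alpha> where \<alpha>: "h \<alpha> \<noteq> 0" "\<alpha> (Suc i) = ?M"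
    by auto
  have max: "\<gamma> (Suc i) \<le> ?M" if "h \<gamma> \<noteq> 0" for \<gamma>
    using fin that by (intro Max_ge) auto
  let ?\<beta> = "\<alpha>(Suc i := Suc (\<alpha> (Suc i)))"
  have "?\<beta>(Suc i := ?\<beta> (Suc i) - 1) = \<alpha>"
    by (simp add: fun_eq_iff)
  then have "pX (Suc i) h ?\<beta> = h \<alpha>"
    by (simp add: pX_def)
  moreover have "pX i h ?\<beta> = 0"
    using max[of "?\<beta>(i := ?\<beta> i - 1)"] \<alpha>(2) by (auto simp: pX_def)
  ultimately have "mult_diff i h ?\<beta> = h \<alpha>"
    by (simp add: mult_diff_def)
  then show False
    using z \<alpha>(1) by simp
qed

lemma mult_diff_inj:
  assumes "fin_supp h1" "fin_supp h2" "mult_diff i h1 = mult_diff i h2"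
  shows "h1 = h2"
proof -
  have "mult_diff i (\<lambda>\<alpha>. 1 * h1 \<alpha> + (- 1) * h2 \<alpha>) = (\<lambda>_. 0)"
    unfolding mult_diff_lin using assms(3) by simp
  then have "(\<lambda>\<alpha>. 1 * h1 \<alpha> + (- 1) * h2 \<alpha>) = (\<lambda>_. 0)"
    using mult_diff_eq_0 fin_supp_lin[OF assms(1,2)] by blast
  then show ?thesis
    by (auto simp: fun_eq_iff)
qed

definition diff_divisible :: "nat \<Rightarrow> mpol \<Rightarrow> bool" where
  "diff_divisible i g \<longleftrightarrow> (\<exists>h. fin_supp h \<and> mult_diff i h = g)"

lemma diff_divisible_0: "diff_divisible i (\<lambda>_. 0)"
  unfolding diff_divisible_def by (rule exI[of _ "\<lambda>_. 0"]) (simp add: mult_diff_def)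

lemma diff_divisible_lin:
  assumes "diff_divisible i f" "diff_divisible i g"
  shows "diff_divisible i (\<lambda>\<alpha>. c * f \<alpha> + d * g \<alpha>)"
proof -
  obtain h1 h2 where "fin_supp h1" "mult_diff i h1 = f" "fin_supp h2" "mult_diff i h2 = g"
    using assms unfolding diff_divisible_def by blast
  then show ?thesis
    unfolding diff_divisible_def
    by (intro exI[of _ "\<lambda>\<alpha>. c * h1 \<alpha> + d * h2 \<alpha>"]) (simp add: fin_supp_lin mult_diff_lin)
qed

lemma diff_divisible_trans:
  assumes "diff_divisible i (\<lambda>x. f x - g x)" "diff_divisible i (\<lambda>x. g x - h x)"
  shows "diff_divisible i (\<lambda>x. f x - h x)"
  using diff_divisible_lin[OF assms, of 1 1] by (rule back_subst) (simp add: fun_eq_iff)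

lemma diff_divisible_step:
  assumes "\<alpha> i > 0"
  shows "diff_divisible i (\<lambda>x. Xpow \<alpha> x - Xpow (\<alpha>(i := \<alpha> i - 1, Suc i := Suc (\<alpha> (Suc i)))) x)"
proof -
  let ?\<gamma> = "\<alpha>(i := \<alpha> i - 1)"
  have "?\<gamma>(i := Suc (?\<gamma> i)) = \<alpha>"
    using assms by (auto simp: fun_eq_iff)
  moreover have "?\<gamma>(Suc i := Suc (?\<gamma> (Suc i))) = \<alpha>(i := \<alpha> i - 1, Suc i := Suc (\<alpha> (Suc i)))"
    by (auto simp: fun_eq_iff)
  ultimately have "mult_diff i (\<lambda>x. (- 1) * Xpow ?\<gamma> x) =
      (\<lambda>x. Xpow \<alpha> x - Xpow (\<alpha>(i := \<alpha> i - 1, Suc i := Suc (\<alpha> (Suc i)))) x)"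
    unfolding mult_diff_def pX_mult pX_Xpow by simp
  then show ?thesis
    unfolding diff_divisible_def using fin_supp_mult[OF fin_supp_Xpow] by blast
qed

lemma diff_divisible_shift:
  "k \<le> \<alpha> i \<Longrightarrow>
   diff_divisible i (\<lambda>x. Xpow \<alpha> x - Xpow (\<alpha>(i := \<alpha> i - k, Suc i := \<alpha> (Suc i) + k)) x)"
proof (induct k)
  case 0
  have "\<alpha>(i := \<alpha> i - 0, Suc i := \<alpha> (Suc i) + 0) = \<alpha>"
    by (simp add: fun_eq_iff)
  then show ?case
    using diff_divisible_0 by simp
next
  case (Suc k)
  let ?\<beta> = "\<alpha>(i := \<alpha> i - k, Suc i := \<alpha> (Suc i) + k)"
  have \<beta>: "?\<beta> i > 0"
    using Suc.prems by simp
  have e: "?\<beta>(i := ?\<beta> i - 1, Suc i := Suc (?\<beta> (Suc i))) =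
      \<alpha>(i := \<alpha> i - Suc k, Suc i := \<alpha> (Suc i) + Suc k)"
    by (simp add: fun_eq_iff)
  have "diff_divisible i (\<lambda>x. Xpow \<alpha> x - Xpow ?\<beta> x)"
    by (rule Suc.hyps) (use Suc.prems in simp)
  then show ?case
    using diff_divisible_step[of ?\<beta> i, OF \<beta>, unfolded e] by (rule diff_divisible_trans)
qed

lemma diff_divisible_Xpow_swap: "diff_divisible i (\<lambda>x. Xpow \<alpha> x - Xpow (\<alpha> \<circ> transpose i (Suc i)) x)"
proof (cases "\<alpha> (Suc i) \<le> \<alpha> i")
  case True
  have "\<alpha>(i := \<alpha> i - (\<alpha> i - \<alpha> (Suc i)), Suc i := \<alpha> (Suc i) + (\<alpha> i - \<alpha> (Suc i))) = \<alpha> \<circ> transpose i (Suc i)"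
    using True by (simp add: fun_eq_iff transpose_def)
  then show ?thesis
    using diff_divisible_shift[of "\<alpha> i - \<alpha> (Suc i)" \<alpha> i] by simp
next
  case False
  let ?\<beta> = "\<alpha> \<circ> transpose i (Suc i)"
  have "?\<beta>(i := ?\<beta> i - (?\<beta> i - ?\<beta> (Suc i)), Suc i := ?\<beta> (Suc i) + (?\<beta> i - ?\<beta> (Suc i))) = \<alpha>"
    using False by (simp add: fun_eq_iff transpose_def)
  then have "diff_divisible i (\<lambda>x. Xpow ?\<beta> x - Xpow \<alpha> x)"
    using diff_divisible_shift[of "?\<beta> i - ?\<beta> (Suc i)" ?\<beta> i] by simp
  from diff_divisible_lin[OF this this, of "- 1" 0] show ?thesis
    by simp
qed

lemma diff_divisible_antisym_upd:
  assumes "diff_divisible i (\<lambda>\<alpha>. (f(a := 0)) \<alpha> - psw i (f(a := 0)) \<alpha>)"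
  shows "diff_divisible i (\<lambda>\<alpha>. f \<alpha> - psw i f \<alpha>)"
proof -
  have e: "(\<lambda>\<alpha>. 1 * ((f(a := 0)) \<alpha> - psw i (f(a := 0)) \<alpha>) + f a * (Xpow a \<alpha> - Xpow (a \<circ> transpose i (Suc i)) \<alpha>))
      = (\<lambda>\<alpha>. f \<alpha> - psw i f \<alpha>)"
  proof
    fix x :: "nat \<Rightarrow> nat"
    have "x \<circ> transpose i (Suc i) = a \<longleftrightarrow> x = a \<circ> transpose i (Suc i)"
      by (metis comp_transpose_transpose)
    then show "1 * ((f(a := 0)) x - psw i (f(a := 0)) x) + f a * (Xpow a x - Xpow (a \<circ> transpose i (Suc i)) x)
        = f x - psw i f x"
      by (auto simp: psw_apply Xpow_def)
  qed
  show ?thesis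
    using diff_divisible_lin[OF assms diff_divisible_Xpow_swap[of i a], of 1 "f a"] unfolding e .
qed

lemma diff_divisible_antisym:
  assumes "fin_supp f"
  shows "diff_divisible i (\<lambda>\<alpha>. f \<alpha> - psw i f \<alpha>)"
proof -
  have "diff_divisible i (\<lambda>\<alpha>. f \<alpha> - psw i f \<alpha>)" if "finite S" "{\<alpha>. f \<alpha> \<noteq> 0} \<subseteq> S" for S f
    using that
  proof (induct S arbitrary: f rule: finite_induct)
    case empty
    then have "f = (\<lambda>_. 0)"
      by auto
    then show ?case
      using diff_divisible_0 by (simp add: psw_apply)
  next
    case (insert a S)
    then have "{\<alpha>. (f(a := 0)) \<alpha> \<noteq> 0} \<subseteq> S"
      by auto
    then show ?case
      by (rule diff_divisible_antisym_upd[OF insert.hyps(3)])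
  qed
  then show ?thesis
    using assms unfolding fin_supp_def by blast
qed

lemma pD_eq:
  assumes f: "fin_supp f" and h: "fin_supp h" and e: "mult_diff i h = (\<lambda>\<alpha>. f \<alpha> - psw i f \<alpha>)"
  shows "pD i f = pX i h"
proof -
  have "(THE h. finite {\<alpha>. h \<alpha> \<noteq> 0} \<and> (\<lambda>\<alpha>. pX (Suc i) h \<alpha> - pX i h \<alpha>) = (\<lambda>\<alpha>. f \<alpha> - psw i f \<alpha>)) = h"
  proof (rule the_equality)
    show "finite {\<alpha>. h \<alpha> \<noteq> 0} \<and> (\<lambda>\<alpha>. pX (Suc i) h \<alpha> - pX i h \<alpha>) = (\<lambda>\<alpha>. f \<alpha> - psw i f \<alpha>)"
      using h e by (simp add: fin_supp_def mult_diff_def)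
  next
    fix h' assume "finite {\<alpha>. h' \<alpha> \<noteq> 0} \<and> (\<lambda>\<alpha>. pX (Suc i) h' \<alpha> - pX i h' \<alpha>) = (\<lambda>\<alpha>. f \<alpha> - psw i f \<alpha>)"
    then have "fin_supp h'" "mult_diff i h' = mult_diff i h"
      using e by (simp_all add: fin_supp_def mult_diff_def)
    then show "h' = h"
      using mult_diff_inj h by blast
  qed
  then show ?thesis
    by (simp add: pD_def)
qed

lemma pD_cases:
  assumes "fin_supp f"
  obtains h where "fin_supp h" "mult_diff i h = (\<lambda>\<alpha>. f \<alpha> - psw i f \<alpha>)" "pD i f = pX i h"
  using diff_divisible_antisym[OF assms, of i] pD_eq[OF assms] unfolding diff_divisible_def by blast

lemma pD_exp_0: "\<alpha> i = 0 \<Longrightarrow> pD i f \<alpha> = 0"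
  by (simp add: pD_def pX_def)

lemma pD_exp_Suc_0:
  assumes f: "fin_supp f" and \<alpha>: "\<alpha> (Suc i) = 0"
  shows "pD i f \<alpha> = psw i f \<alpha> - f \<alpha>"
proof -
  obtain h where h: "mult_diff i h = (\<lambda>\<alpha>. f \<alpha> - psw i f \<alpha>)" "pD i f = pX i h"
    using pD_cases[OF f] by metis
  have "mult_diff i h \<alpha> = - pX i h \<alpha>"
    using \<alpha> by (simp add: mult_diff_def pX_def)
  then show ?thesis
    using h by (simp add: fun_eq_iff)
qed

lemma fin_supp_pD: "fin_supp f \<Longrightarrow> fin_supp (pD i f)"
  using pD_cases fin_supp_pX by metis

lemma pD_0 [simp]: "pD i (\<lambda>_. 0) = (\<lambda>_. 0)"
  using pD_eq[of "\<lambda>_. 0" "\<lambda>_. 0" i] by (simp add: psw_def mult_diff_def)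

lemma pD_lin:
  assumes f: "fin_supp f" and g: "fin_supp g"
  shows "pD i (\<lambda>\<alpha>. c * f \<alpha> + d * g \<alpha>) = (\<lambda>\<alpha>. c * pD i f \<alpha> + d * pD i g \<alpha>)"
proof -
  obtain h1 where h1: "fin_supp h1" "mult_diff i h1 = (\<lambda>\<alpha>. f \<alpha> - psw i f \<alpha>)" "pD i f = pX i h1"
    using pD_cases[OF f] by blast
  obtain h2 where h2: "fin_supp h2" "mult_diff i h2 = (\<lambda>\<alpha>. g \<alpha> - psw i g \<alpha>)" "pD i g = pX i h2"
    using pD_cases[OF g] by blast
  have "mult_diff i (\<lambda>\<alpha>. c * h1 \<alpha> + d * h2 \<alpha>) =
      (\<lambda>\<alpha>. (c * f \<alpha> + d * g \<alpha>) - psw i (\<lambda>\<alpha>. c * f \<alpha> + d * g \<alpha>) \<alpha>)"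
    unfolding mult_diff_lin h1(2) h2(2) by (rule ext) (simp add: psw_apply algebra_simps)
  then have "pD i (\<lambda>\<alpha>. c * f \<alpha> + d * g \<alpha>) = pX i (\<lambda>\<alpha>. c * h1 \<alpha> + d * h2 \<alpha>)"
    by (rule pD_eq[OF fin_supp_lin[OF f g] fin_supp_lin[OF h1(1) h2(1)]])
  then show ?thesis
    unfolding pX_lin h1(3) h2(3) .
qed

lemma pD_mult: "fin_supp f \<Longrightarrow> pD i (\<lambda>\<alpha>. c * f \<alpha>) = (\<lambda>\<alpha>. c * pD i f \<alpha>)"
  using pD_lin[of f f i c 0] by simp

lemma pD_sum:
  "finite A \<Longrightarrow> (\<And>a. a \<in> A \<Longrightarrow> fin_supp (F a)) \<Longrightarrow>
   pD i (\<lambda>\<alpha>. \<Sum>a\<in>A. F a \<alpha>) = (\<lambda>\<alpha>. \<Sum>a\<in>A. pD i (F a) \<alpha>)"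
proof (induct A rule: finite_induct)
  case (insert x A)
  have "pD i (\<lambda>\<alpha>. 1 * F x \<alpha> + 1 * (\<Sum>a\<in>A. F a \<alpha>)) =
      (\<lambda>\<alpha>. 1 * pD i (F x) \<alpha> + 1 * pD i (\<lambda>\<alpha>. \<Sum>a\<in>A. F a \<alpha>) \<alpha>)"
    using insert.prems by (intro pD_lin fin_supp_sum) simp_all
  then show ?case
    using insert by simp
qed simp

lemma psw_pX_i: "psw i (pX i h) = pX (Suc i) (psw i h)"
proof
  fix \<alpha> :: "nat \<Rightarrow> nat"
  have "(\<alpha> \<circ> transpose i (Suc i))(i := (\<alpha> \<circ> transpose i (Suc i)) i - 1) =
      \<alpha>(Suc i := \<alpha> (Suc i) - 1) \<circ> transpose i (Suc i)"
    by (simp add: fun_eq_iff transpose_def)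
  then show "psw i (pX i h) \<alpha> = pX (Suc i) (psw i h) \<alpha>"
    unfolding psw_apply pX_def by simp
qed

lemma psw_pX_Suc: "psw i (pX (Suc i) h) = pX i (psw i h)"
  by (metis psw_pX_i psw_psw)

lemma psw_quotient:
  assumes h: "fin_supp h" and e: "mult_diff i h = (\<lambda>\<alpha>. f \<alpha> - psw i f \<alpha>)"
  shows "psw i h = h"
proof (rule mult_diff_inj[OF fin_supp_psw[OF h] h])
  show "mult_diff i (psw i h) = mult_diff i h"
  proof
    fix \<alpha>
    have "mult_diff i (psw i h) \<alpha> = - mult_diff i h (\<alpha> \<circ> transpose i (Suc i))"
      by (simp add: mult_diff_def psw_pX_i[symmetric] psw_pX_Suc[symmetric] psw_apply)
    also have "\<dots> = mult_diff i h \<alpha>"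
      unfolding e by (simp add: psw_apply)
    finally show "mult_diff i (psw i h) \<alpha> = mult_diff i h \<alpha>" .
  qed
qed

lemma pD_psw:
  assumes f: "fin_supp f"
  shows "pD i (psw i f) = (\<lambda>\<alpha>. - pD i f \<alpha>)"
proof -
  obtain h where h: "fin_supp h" "mult_diff i h = (\<lambda>\<alpha>. f \<alpha> - psw i f \<alpha>)" "pD i f = pX i h"
    using pD_cases[OF f] by blast
  have "mult_diff i (\<lambda>\<alpha>. (- 1) * h \<alpha> + 0 * h \<alpha>) = (\<lambda>\<alpha>. psw i f \<alpha> - psw i (psw i f) \<alpha>)"
    unfolding mult_diff_lin h(2) by simp
  then have "pD i (psw i f) = pX i (\<lambda>\<alpha>. (- 1) * h \<alpha> + 0 * h \<alpha>)"
    by (rule pD_eq[OF fin_supp_psw[OF f] fin_supp_lin[OF h(1) h(1)]])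
  then show ?thesis
    unfolding pX_lin h(3) by simp
qed

lemma psw_pD:
  assumes f: "fin_supp f"
  shows "psw i (pD i f) = (\<lambda>\<alpha>. f \<alpha> - psw i f \<alpha> + pD i f \<alpha>)"
proof -
  obtain h where h: "fin_supp h" "mult_diff i h = (\<lambda>\<alpha>. f \<alpha> - psw i f \<alpha>)" "pD i f = pX i h"
    using pD_cases[OF f] by blast
  have "psw i (pD i f) = pX (Suc i) h"
    unfolding h(3) psw_pX_i psw_quotient[OF h(1,2)] ..
  also have "\<dots> = (\<lambda>\<alpha>. f \<alpha> - psw i f \<alpha> + pD i f \<alpha>)"
    using h(2,3) by (simp add: fun_eq_iff mult_diff_def) (metis diff_add_cancel)
  finally show ?thesis .
qed

lemma pD_pD:
  assumes f: "fin_supp f"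
  shows "pD i (pD i f) = (\<lambda>\<alpha>. - pD i f \<alpha>)"
proof -
  obtain h where h: "fin_supp h" "mult_diff i h = (\<lambda>\<alpha>. f \<alpha> - psw i f \<alpha>)" "pD i f = pX i h"
    using pD_cases[OF f] by blast
  have "mult_diff i (\<lambda>\<alpha>. (- 1) * h \<alpha> + 0 * h \<alpha>) = (\<lambda>\<alpha>. pD i f \<alpha> - psw i (pD i f) \<alpha>)"
    unfolding mult_diff_lin psw_pD[OF f] h(2) by simp
  then have "pD i (pD i f) = pX i (\<lambda>\<alpha>. (- 1) * h \<alpha> + 0 * h \<alpha>)"
    by (rule pD_eq[OF fin_supp_pD[OF f] fin_supp_lin[OF h(1) h(1)]])
  then show ?thesis
    unfolding pX_lin h(3) by simp
qed

definition free_part :: "nat \<Rightarrow> mpol \<Rightarrow> mpol" where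
  "free_part j f = (\<lambda>\<alpha>. if \<alpha> j = 0 then f \<alpha> else 0)"

lemma fin_supp_free_part: "fin_supp f \<Longrightarrow> fin_supp (free_part j f)"
  unfolding fin_supp_def free_part_def by (rule finite_subset[of _ "{\<alpha>. f \<alpha> \<noteq> 0}"]) auto

lemma pX_free_part: "k \<noteq> j \<Longrightarrow> pX k (free_part j h) = free_part j (pX k h)"
  by (rule ext) (simp add: pX_def free_part_def)

lemma psw_free_part: "j \<noteq> i \<Longrightarrow> j \<noteq> Suc i \<Longrightarrow> psw i (free_part j h) = free_part j (psw i h)"
  by (rule ext) (simp add: psw_apply free_part_def)

lemma pD_free_part:
  assumes f: "fin_supp f" and j: "j \<noteq> i" "j \<noteq> Suc i"
  shows "pD i (free_part j f) = free_part j (pD i f)"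
proof -
  obtain h where h: "fin_supp h" "mult_diff i h = (\<lambda>\<alpha>. f \<alpha> - psw i f \<alpha>)" "pD i f = pX i h"
    using pD_cases[OF f] by blast
  have "mult_diff i (free_part j h) = free_part j (mult_diff i h)"
    using j by (simp add: mult_diff_def pX_free_part) (simp add: free_part_def fun_eq_iff)
  also have "\<dots> = (\<lambda>\<alpha>. free_part j f \<alpha> - psw i (free_part j f) \<alpha>)"
    unfolding h(2) psw_free_part[OF j] by (simp add: free_part_def fun_eq_iff)
  finally have "pD i (free_part j f) = pX i (free_part j h)"
    by (rule pD_eq[OF fin_supp_free_part[OF f] fin_supp_free_part[OF h(1)]])
  then show ?thesis
    unfolding h(3) using pX_free_part j by metis
qed

section \<open>The induced module\<close>

definition wf_vec :: "nat list \<Rightarrow> vec \<Rightarrow> bool" where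
  "wf_vec nu v \<longleftrightarrow> (\<forall>\<tau>. fin_supp (v \<tau>)) \<and> (\<forall>\<tau>. \<tau> \<notin> SYT nu \<longrightarrow> v \<tau> = (\<lambda>_. 0))"

lemma wf_vec_fin_supp: "wf_vec nu v \<Longrightarrow> fin_supp (v \<tau>)"
  by (simp add: wf_vec_def)

lemma wf_vec_SYT_supported: "wf_vec nu v \<Longrightarrow> SYT_supported nu (\<lambda>\<sigma>. v \<sigma> \<alpha>)"
  by (simp add: wf_vec_def SYT_supported_def)

lemma Vspace_imp_wf_vec:
  assumes "v \<in> Vspace nu"
  shows "wf_vec nu v"
proof -
  have fin: "finite {(\<tau>, \<alpha>). v \<tau> \<alpha> \<noteq> 0}" and supp: "\<forall>\<tau> \<alpha>. v \<tau> \<alpha> \<noteq> 0 \<longrightarrow> \<tau> \<in> SYT nu"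
    using assms unfolding Vspace_def by blast+
  have "{\<alpha>. v \<tau> \<alpha> \<noteq> 0} \<subseteq> snd ` {(\<tau>, \<alpha>). v \<tau> \<alpha> \<noteq> 0}" for \<tau>
    by force
  then have "fin_supp (v \<tau>)" for \<tau>
    unfolding fin_supp_def using fin finite_subset by blast
  then show ?thesis
    using supp unfolding wf_vec_def by auto
qed

lemma wf_vec_lin: "wf_vec nu x \<Longrightarrow> wf_vec nu y \<Longrightarrow> wf_vec nu (\<lambda>\<tau> \<alpha>. c * x \<tau> \<alpha> + d * y \<tau> \<alpha>)"
  unfolding wf_vec_def using fin_supp_lin by auto

lemma wf_vec_mult: "wf_vec nu v \<Longrightarrow> wf_vec nu (\<lambda>\<tau> \<alpha>. c * v \<tau> \<alpha>)"
  using wf_vec_lin[of nu v v c 0] by simp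

lemma VT_eq:
  "VT nu i v \<tau> \<alpha> = ST nu i (\<lambda>\<sigma>. v \<sigma> (\<alpha> \<circ> transpose i (Suc i))) \<tau> + (tt - 1) * pD i (v \<tau>) \<alpha>"
  by (simp add: VT_def ST_def psw_apply)

lemma fin_supp_VT_sum:
  "wf_vec nu v \<Longrightarrow> fin_supp (\<lambda>\<alpha>. \<Sum>\<sigma>\<in>SYT nu. Tcoef nu i \<sigma> \<tau> * psw i (v \<sigma>) \<alpha>)"
  by (intro fin_supp_sum fin_supp_mult fin_supp_psw wf_vec_fin_supp)

lemma wf_vec_VT:
  assumes "wf_vec nu v"
  shows "wf_vec nu (VT nu i v)"
proof -
  have "fin_supp (VT nu i v \<tau>)" for \<tau>
    using fin_supp_lin[OF fin_supp_VT_sum[OF assms] fin_supp_pD[OF wf_vec_fin_supp[OF assms]],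
        where c = 1 and d = "tt - 1"]
    by (simp add: VT_def)
  moreover have "VT nu i v \<tau> = (\<lambda>_. 0)" if \<tau>: "\<tau> \<notin> SYT nu" for \<tau>
  proof -
    have "v \<tau> = (\<lambda>_. 0)"
      using assms \<tau> by (simp add: wf_vec_def)
    then have "pD i (v \<tau>) = (\<lambda>_. 0)"
      by simp
    then show ?thesis
      using \<tau> by (simp add: fun_eq_iff VT_eq ST_not_SYT)
  qed
  ultimately show ?thesis
    unfolding wf_vec_def by blast
qed

lemma VTinv_eq: "VTinv nu i v = (\<lambda>\<tau> \<alpha>. (1 / tt) * VT nu i v \<tau> \<alpha> + ((tt - 1) / tt) * v \<tau> \<alpha>)"
  by (simp add: VTinv_def fun_eq_iff add_divide_distrib)

lemma wf_vec_VTinv: "wf_vec nu v \<Longrightarrow> wf_vec nu (VTinv nu i v)"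
  unfolding VTinv_eq by (intro wf_vec_lin wf_vec_VT)

lemma ST_lin: "ST nu i (\<lambda>\<sigma>. c * f \<sigma> + d * g \<sigma>) \<tau> = c * ST nu i f \<tau> + d * ST nu i g \<tau>"
  by (simp add: ST_def sum.distrib sum_distrib_left algebra_simps)

lemma VT_lin:
  assumes x: "wf_vec nu x" and y: "wf_vec nu y"
  shows "VT nu i (\<lambda>\<tau> \<alpha>. c * x \<tau> \<alpha> + d * y \<tau> \<alpha>) = (\<lambda>\<tau> \<alpha>. c * VT nu i x \<tau> \<alpha> + d * VT nu i y \<tau> \<alpha>)"
proof (intro ext)
  fix \<tau> \<alpha>
  have "pD i (\<lambda>\<alpha>. c * x \<tau> \<alpha> + d * y \<tau> \<alpha>) \<alpha> = c * pD i (x \<tau>) \<alpha> + d * pD i (y \<tau>) \<alpha>"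
    using pD_lin[OF wf_vec_fin_supp[OF x] wf_vec_fin_supp[OF y]] by simp
  then show "VT nu i (\<lambda>\<tau> \<alpha>. c * x \<tau> \<alpha> + d * y \<tau> \<alpha>) \<tau> \<alpha> = c * VT nu i x \<tau> \<alpha> + d * VT nu i y \<tau> \<alpha>"
    unfolding VT_eq ST_lin by (simp add: algebra_simps)
qed

lemma VTinv_lin:
  assumes "wf_vec nu x" "wf_vec nu y"
  shows "VTinv nu i (\<lambda>\<tau> \<alpha>. c * x \<tau> \<alpha> + d * y \<tau> \<alpha>) =
    (\<lambda>\<tau> \<alpha>. c * VTinv nu i x \<tau> \<alpha> + d * VTinv nu i y \<tau> \<alpha>)"
  unfolding VTinv_def VT_lin[OF assms] by (intro ext) (simp add: field_simps)

lemma pD_VT: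
  assumes v: "wf_vec nu v"
  shows "pD i (VT nu i v \<tau>) \<alpha> = - ST nu i (\<lambda>\<sigma>. pD i (v \<sigma>) \<alpha>) \<tau> - (tt - 1) * pD i (v \<tau>) \<alpha>"
proof -
  have "pD i (VT nu i v \<tau>) = (\<lambda>\<alpha>. pD i (\<lambda>\<alpha>. \<Sum>\<sigma>\<in>SYT nu. Tcoef nu i \<sigma> \<tau> * psw i (v \<sigma>) \<alpha>) \<alpha>
      + (tt - 1) * pD i (pD i (v \<tau>)) \<alpha>)"
    using pD_lin[OF fin_supp_VT_sum[OF v] fin_supp_pD[OF wf_vec_fin_supp[OF v]],
        where c = 1 and d = "tt - 1"]
    by (simp add: VT_def)
  also have "pD i (\<lambda>\<alpha>. \<Sum>\<sigma>\<in>SYT nu. Tcoef nu i \<sigma> \<tau> * psw i (v \<sigma>) \<alpha>) =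
      (\<lambda>\<alpha>. \<Sum>\<sigma>\<in>SYT nu. Tcoef nu i \<sigma> \<tau> * (- pD i (v \<sigma>) \<alpha>))"
    using v by (simp add: pD_sum finite_SYT fin_supp_mult fin_supp_psw wf_vec_fin_supp pD_mult pD_psw)
  finally show ?thesis
    by (simp add: pD_pD[OF wf_vec_fin_supp[OF v]] ST_def sum_negf algebra_simps)
qed

lemma VT_quadratic:
  assumes v: "wf_vec nu v" and nu: "sorted_wrt (\<ge>) nu" and i: "1 \<le> i" "Suc i \<le> sum_list nu"
  shows "VT nu i (VT nu i v) = (\<lambda>\<tau> \<alpha>. (1 - tt) * VT nu i v \<tau> \<alpha> + tt * v \<tau> \<alpha>)"
proof (intro ext)
  fix \<tau> :: tab and \<alpha> :: "nat \<Rightarrow> nat"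
  let ?s\<alpha> = "\<alpha> \<circ> transpose i (Suc i)"
  let ?g = "\<lambda>\<sigma>. v \<sigma> \<alpha>" and ?g' = "\<lambda>\<sigma>. v \<sigma> ?s\<alpha>" and ?d = "\<lambda>\<sigma>. pD i (v \<sigma>) \<alpha>"
  have swapped: "VT nu i v \<sigma> ?s\<alpha> = ST nu i ?g \<sigma> + (tt - 1) * (v \<sigma> \<alpha> - v \<sigma> ?s\<alpha> + pD i (v \<sigma>) \<alpha>)"
    for \<sigma>
    using fun_cong[OF psw_pD[OF wf_vec_fin_supp[OF v, of \<sigma>], of i], of \<alpha>] by (simp add: VT_eq psw_apply)
  have "VT nu i (VT nu i v) \<tau> \<alpha> = ST nu i (\<lambda>\<sigma>. VT nu i v \<sigma> ?s\<alpha>) \<tau> + (tt - 1) * pD i (VT nu i v \<tau>) \<alpha>"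
    by (rule VT_eq)
  also have "ST nu i (\<lambda>\<sigma>. VT nu i v \<sigma> ?s\<alpha>) \<tau> =
      ST nu i (ST nu i ?g) \<tau> + (tt - 1) * (ST nu i ?g \<tau> - ST nu i ?g' \<tau> + ST nu i ?d \<tau>)"
    unfolding swapped by (simp add: ST_def sum.distrib sum_distrib_left sum_subtractf algebra_simps)
  also have "ST nu i (ST nu i ?g) \<tau> = (1 - tt) * ST nu i ?g \<tau> + tt * v \<tau> \<alpha>"
    by (rule ST_quadratic[OF nu wf_vec_SYT_supported[OF v] i])
  also have "pD i (VT nu i v \<tau>) \<alpha> = - ST nu i ?d \<tau> - (tt - 1) * pD i (v \<tau>) \<alpha>"
    by (rule pD_VT[OF v])
  finally show "VT nu i (VT nu i v) \<tau> \<alpha> = (1 - tt) * VT nu i v \<tau> \<alpha> + tt * v \<tau> \<alpha>"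
    unfolding VT_eq[of nu i v \<tau> \<alpha>] by (simp add: algebra_simps comp_def)
qed

lemma VT_VTinv:
  assumes v: "wf_vec nu v" and "sorted_wrt (\<ge>) nu" "1 \<le> i" "Suc i \<le> sum_list nu"
  shows "VT nu i (VTinv nu i v) = v"
proof -
  have "VT nu i (VTinv nu i v) =
      (\<lambda>\<tau> \<alpha>. (1 / tt) * VT nu i (VT nu i v) \<tau> \<alpha> + ((tt - 1) / tt) * VT nu i v \<tau> \<alpha>)"
    unfolding VTinv_eq by (rule VT_lin[OF wf_vec_VT[OF v] v])
  also have "\<dots> = v"
    unfolding VT_quadratic[OF assms] by (intro ext) (simp add: field_simps)
  finally show ?thesis .
qed

lemma wf_vec_foldr_VT: "wf_vec nu v \<Longrightarrow> wf_vec nu (foldr (VT nu) l v)"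
  by (induct l) (simp_all add: wf_vec_VT)

fun VTinv_downto :: "nat list \<Rightarrow> nat \<Rightarrow> vec \<Rightarrow> vec" where
  "VTinv_downto nu 0 v = v"
| "VTinv_downto nu (Suc k) v = VTinv nu (Suc k) (VTinv_downto nu k v)"

lemma wf_vec_VTinv_downto: "wf_vec nu v \<Longrightarrow> wf_vec nu (VTinv_downto nu k v)"
  by (induct k) (simp_all add: wf_vec_VTinv)

definition pi_exps :: "nat \<Rightarrow> (nat \<Rightarrow> nat) \<Rightarrow> (nat \<Rightarrow> nat)" where
  "pi_exps m \<beta> = (\<lambda>j. if 1 \<le> j \<and> j < m then \<beta> (Suc j) else if j = m then \<beta> 1 else \<beta> j)"

lemma ppi_eq: "ppi m f \<beta> = qq ^ (\<beta> 1) * f (pi_exps m \<beta>)"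
  by (simp add: ppi_def pi_exps_def)

lemma pi_exps_inj:
  assumes "1 \<le> m"
  shows "inj (pi_exps m)"
proof (rule injI)
  fix x y assume e: "pi_exps m x = pi_exps m y"
  show "x = y"
  proof
    fix j
    consider "j = 0" | "j = 1" | "2 \<le> j" "j \<le> m" | "m < j"
      by linarith
    then show "x j = y j"
    proof cases
      case 1
      then show ?thesis using fun_cong[OF e, of 0] assms by (simp add: pi_exps_def)
    next
      case 2
      then show ?thesis using fun_cong[OF e, of m] assms by (simp add: pi_exps_def)
    next
      case 3
      then have "1 \<le> j - 1" "j - 1 < m" "Suc (j - 1) = j"
        by auto
      then show ?thesis
        using fun_cong[OF e, of "j - 1"] by (simp add: pi_exps_def)
    next
      case 4
      then show ?thesis using fun_cong[OF e, of j] assms by (simp add: pi_exps_def)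
    qed
  qed
qed

lemma fin_supp_ppi:
  assumes "1 \<le> m" "fin_supp f"
  shows "fin_supp (ppi m f)"
proof -
  have "finite (pi_exps m -` {\<alpha>. f \<alpha> \<noteq> 0})"
    using assms pi_exps_inj finite_vimageI unfolding fin_supp_def by blast
  then show ?thesis
    unfolding fin_supp_def by (rule finite_subset[rotated]) (auto simp: ppi_eq)
qed

lemma Vpi_eq_Pbar:
  assumes "wf_vec nu w"
  shows "Vpi nu w \<tau> \<alpha> = Pbar nu (\<lambda>\<sigma>. ppi (sum_list nu) (w \<sigma>) \<alpha>) \<tau>"
proof -
  have supp: "SYT_supported nu (\<lambda>\<sigma>. ppi (sum_list nu) (w \<sigma>) \<alpha>)"
    using assms by (simp add: wf_vec_def SYT_supported_def ppi_eq)
  show ?thesis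
    unfolding Pbar_expand[OF supp] Vpi_def by (simp add: mult.commute)
qed

lemma wf_vec_Vpi:
  assumes v: "wf_vec nu v" and m: "sum_list nu = Suc k"
  shows "wf_vec nu (Vpi nu v)"
proof -
  have "fin_supp (Vpi nu v \<tau>)" for \<tau>
    unfolding Vpi_def using fin_supp_ppi[OF _ wf_vec_fin_supp[OF v]] m
    by (intro fin_supp_sum fin_supp_mult) simp
  moreover have "Vpi nu v \<tau> = (\<lambda>_. 0)" if \<tau>: "\<tau> \<notin> SYT nu" for \<tau>
  proof -
    have "Pbar nu (\<lambda>\<rho>. if \<rho> = \<sigma> then 1 else 0) \<tau> = 0" if "\<sigma> \<in> SYT nu" for \<sigma>
      using SYT_supported_Pbar[OF m, of "\<lambda>\<rho>. if \<rho> = \<sigma> then 1 else 0"] that \<tau>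
      by (simp add: SYT_supported_def)
    then show ?thesis
      unfolding Vpi_def by (intro ext sum.neutral) simp
  qed
  ultimately show ?thesis
    unfolding wf_vec_def by blast
qed

lemma wf_vec_Vtheta: "sum_list nu = Suc k \<Longrightarrow> wf_vec nu v \<Longrightarrow> wf_vec nu (Vtheta nu j v)"
proof (induct nu j v rule: Vtheta.induct)
  case (2 nu v)
  show ?case
    using wf_vec_mult[OF wf_vec_Vpi[OF wf_vec_foldr_VT[OF "2"(2)] "2"(1)], of "1 / tt ^ (sum_list nu - 1)"]
    by simp
next
  case (3 nu i v)
  show ?case
    using wf_vec_mult[OF wf_vec_VTinv[OF "3"(1)[OF "3"(2) wf_vec_VTinv[OF "3"(3)]]], of tt] by simp
qed simp

section \<open>Restriction from lambda^(n+1) to lambda^(n)\<close>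

lemma sorted_shift_part:
  assumes "is_partition lam" "sum_list lam + lam1 lam \<le> k"
  shows "sorted_wrt (\<ge>) (shift_part k lam)"
proof -
  have sorted: "sorted_wrt (\<ge>) lam"
    using assms(1) by (simp add: is_partition_def)
  then have "y \<le> lam1 lam" if "y \<in> set lam" for y
    using that by (cases lam) (auto simp: lam1_def)
  moreover have "lam1 lam \<le> k - sum_list lam"
    using assms(2) by simp
  ultimately show ?thesis
    using sorted by (auto simp: shift_part_def intro: order_trans)
qed

locale stable_shift =
  fixes lam :: "nat list" and n :: nat
  assumes partition: "is_partition lam" and stable: "sum_list lam + lam1 lam \<le> n"
begin

abbreviation lam_Suc :: "nat list" where "lam_Suc \<equiv> shift_part (Suc n) lam"
abbreviation lam_n :: "nat list" where "lam_n \<equiv> shift_part n lam"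
abbreviation new_box :: "nat \<times> nat" where "new_box \<equiv> (1, Suc n - sum_list lam)"
abbreviation extend :: "tab \<Rightarrow> tab" where "extend \<rho> \<equiv> \<rho>(Suc n := new_box)"

lemma sum_list_le: "sum_list lam \<le> n"
  using stable by simp

lemma sum_list_lam_Suc [simp]: "sum_list lam_Suc = Suc n"
  using sum_list_le by (simp add: shift_part_def)

lemma sum_list_lam_n [simp]: "sum_list lam_n = n"
  using sum_list_le by (simp add: shift_part_def)

lemma sorted_lam_Suc: "sorted_wrt (\<ge>) lam_Suc"
  using sorted_shift_part[OF partition] stable by simp

lemma sorted_lam_n: "sorted_wrt (\<ge>) lam_n"
  using sorted_shift_part[OF partition stable] .

lemma boxes_lam_n_snd_le:
  assumes "(a, b) \<in> boxes lam_n"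
  shows "b \<le> n - sum_list lam"
proof -
  have "lam_n ! (a - 1) \<le> lam_n ! 0"
    using sorted_lam_n assms by (cases "a - 1 = 0") (auto simp: mem_boxes sorted_wrt_iff_nth_less)
  then show ?thesis
    using assms by (simp add: mem_boxes shift_part_def)
qed

lemma new_box_notin: "new_box \<notin> boxes lam_n"
  using boxes_lam_n_snd_le sum_list_le by fastforce

lemma boxes_lam_Suc: "boxes lam_Suc = insert new_box (boxes lam_n)"
proof (rule set_eqI)
  fix x :: "nat \<times> nat"
  obtain a b where x: "x = (a, b)" by force
  show "x \<in> boxes lam_Suc \<longleftrightarrow> x \<in> insert new_box (boxes lam_n)"
    unfolding x mem_boxes using sum_list_le
    by (cases "a = 1") (auto simp: shift_part_def mem_boxes nth_Cons')
qed

lemma extend_SYT: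
  assumes \<rho>: "\<rho> \<in> SYT lam_n"
  shows "extend \<rho> \<in> SYT lam_Suc"
proof -
  have "bij_betw \<rho> {1..n} (boxes lam_n)"
    using SYT_bij[OF \<rho>] by simp
  then have "bij_betw (extend \<rho>) {1..n} (boxes lam_n)"
    by (rule bij_betw_cong[THEN iffD1, rotated]) simp
  then have "bij_betw (extend \<rho>) ({1..n} \<union> {Suc n}) (boxes lam_n \<union> {new_box})"
    using notIn_Un_bij_betw3[of "Suc n" "{1..n}" "extend \<rho>" "boxes lam_n"] new_box_notin by simp
  moreover have "{1..n} \<union> {Suc n} = {1..Suc n}"
    by auto
  ultimately have "bij_betw (extend \<rho>) {1..sum_list lam_Suc} (boxes lam_Suc)"
    by (simp add: boxes_lam_Suc)
  moreover have "extend \<rho> k = (0, 0)" if "k \<notin> {1..sum_list lam_Suc}" for k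
    using that SYT_outside[OF \<rho>, of k] by auto
  moreover have "i \<le> j"
    if "i \<in> {1..sum_list lam_Suc}" "j \<in> {1..sum_list lam_Suc}" "fst (extend \<rho> i) \<le> fst (extend \<rho> j)"
       "snd (extend \<rho> i) \<le> snd (extend \<rho> j)" for i j
  proof (cases "j = Suc n")
    case False
    then have j: "j \<in> {1..sum_list lam_n}"
      using that(2) by auto
    have "snd (\<rho> j) \<le> n - sum_list lam"
      using boxes_lam_n_snd_le SYT_in_boxes[OF \<rho> j] by (metis prod.collapse)
    then show ?thesis
      using that False SYT_le[OF \<rho> _ j] sum_list_le by (cases "i = Suc n") auto
  qed (use that in simp)
  ultimately show ?thesis
    unfolding SYT_def by blast
qed

lemma restrict_SYT:
  assumes \<tau>: "\<tau> \<in> SYT lam_Suc" and new: "\<tau> (Suc n) = new_box"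
  shows "\<tau>(Suc n := (0, 0)) \<in> SYT lam_n"
proof -
  have "bij_betw \<tau> ({1..n} \<union> {Suc n}) (boxes lam_n \<union> {\<tau> (Suc n)})"
    using SYT_bij[OF \<tau>] new boxes_lam_Suc by (simp add: atLeastAtMostSuc_conv Un_commute)
  then have "bij_betw \<tau> {1..n} (boxes lam_n)"
    using notIn_Un_bij_betw3[of "Suc n" "{1..n}" \<tau> "boxes lam_n"] new new_box_notin by simp
  then have "bij_betw (\<tau>(Suc n := (0, 0))) {1..n} (boxes lam_n)"
    by (rule bij_betw_cong[THEN iffD1, rotated]) simp
  then have "bij_betw (\<tau>(Suc n := (0, 0))) {1..sum_list lam_n} (boxes lam_n)"
    by simp
  moreover have "(\<tau>(Suc n := (0, 0))) k = (0, 0)" if "k \<notin> {1..sum_list lam_n}" for k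
    using that SYT_outside[OF \<tau>, of k] by auto
  moreover have "i \<le> j"
    if "i \<in> {1..sum_list lam_n}" "j \<in> {1..sum_list lam_n}"
       "fst ((\<tau>(Suc n := (0, 0))) i) \<le> fst ((\<tau>(Suc n := (0, 0))) j)"
       "snd ((\<tau>(Suc n := (0, 0))) i) \<le> snd ((\<tau>(Suc n := (0, 0))) j)" for i j
    using that SYT_le[OF \<tau>, of i j] by simp
  ultimately show ?thesis
    unfolding SYT_def by blast
qed

lemma content_extend_new: "content (extend \<rho>) (Suc n) = int (n - sum_list lam)"
  using sum_list_le by (simp add: content_def)

lemma swap_tab_extend: "Suc i \<le> n \<Longrightarrow> swap_tab i (extend \<rho>) = extend (swap_tab i \<rho>)"
  by (rule ext) (simp add: swap_tab_def)

lemma content_extend: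
  assumes "Suc i \<le> n"
  shows "content (extend \<rho>) i = content \<rho> i" "content (extend \<rho>) (Suc i) = content \<rho> (Suc i)"
  using assms by (simp_all add: content_def)

lemma extend_swap_tab_SYT_iff:
  assumes \<rho>: "\<rho> \<in> SYT lam_n" and i: "Suc i \<le> n"
  shows "extend (swap_tab i \<rho>) \<in> SYT lam_Suc \<longleftrightarrow> swap_tab i \<rho> \<in> SYT lam_n"
proof
  assume "extend (swap_tab i \<rho>) \<in> SYT lam_Suc"
  from restrict_SYT[OF this] show "swap_tab i \<rho> \<in> SYT lam_n"
    using SYT_outside[OF \<rho>, of "Suc n"] i by (simp add: fun_upd_idem swap_tab_def)
qed (rule extend_SYT)

end

lemma Phi_lin:
  "Phi n lam (\<lambda>\<tau> \<alpha>. c * x \<tau> \<alpha> + d * y \<tau> \<alpha>) = (\<lambda>\<tau> \<alpha>. c * Phi n lam x \<tau> \<alpha> + d * Phi n lam y \<tau> \<alpha>)"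
  by (intro ext) (simp add: Phi_def)

lemma Phi_mult: "Phi n lam (\<lambda>\<tau> \<alpha>. c * x \<tau> \<alpha>) = (\<lambda>\<tau> \<alpha>. c * Phi n lam x \<tau> \<alpha>)"
  by (intro ext) (simp add: Phi_def)

lemma Phi_VX: "j \<noteq> Suc n \<Longrightarrow> Phi n lam (VX j v) = VX j (Phi n lam v)"
  by (intro ext) (simp add: Phi_def VX_def pX_def)

lemma Phi_VX_Suc: "Phi n lam (VX (Suc n) v) = (\<lambda>_ _. 0)"
  by (intro ext) (simp add: Phi_def VX_def pX_def)

lemma VT_free_part:
  assumes w: "wf_vec nu w" and j: "j \<noteq> i" "j \<noteq> Suc i"
  shows "VT nu i (\<lambda>\<rho>. free_part j (w \<rho>)) = (\<lambda>\<rho>. free_part j (VT nu i w \<rho>))"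
proof (intro ext)
  fix \<rho> \<alpha>
  have "(\<lambda>\<sigma>. free_part j (w \<sigma>) (\<alpha> \<circ> transpose i (Suc i))) =
      (\<lambda>\<sigma>. if \<alpha> j = 0 then w \<sigma> (\<alpha> \<circ> transpose i (Suc i)) else 0)"
    using j by (simp add: free_part_def)
  then show "VT nu i (\<lambda>\<rho>. free_part j (w \<rho>)) \<rho> \<alpha> = free_part j (VT nu i w \<rho>) \<alpha>"
    unfolding VT_eq pD_free_part[OF wf_vec_fin_supp[OF w] j]
    by (simp add: free_part_def ST_def)
qed

lemma ppi_free_part: "m < j \<Longrightarrow> ppi m (free_part j f) = free_part j (ppi m f)"
  by (rule ext) (simp add: ppi_eq free_part_def pi_exps_def)

lemma Vpi_free_part:
  assumes "sum_list nu < j"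
  shows "Vpi nu (\<lambda>\<rho>. free_part j (w \<rho>)) = (\<lambda>\<rho>. free_part j (Vpi nu w \<rho>))"
  unfolding Vpi_def ppi_free_part[OF assms] by (intro ext) (simp add: free_part_def)

lemma pi_exps_Suc_transpose:
  "1 \<le> n \<Longrightarrow> pi_exps (Suc n) \<alpha> \<circ> transpose n (Suc n) = pi_exps n \<alpha>"
  by (rule ext) (simp add: pi_exps_def transpose_def)

context stable_shift
begin

definition qres :: "svec \<Rightarrow> svec" where
  "qres x = (\<lambda>\<rho>. if \<rho> \<in> SYT lam_n then x (extend \<rho>) else 0)"

definition Vres :: "vec \<Rightarrow> vec" where
  "Vres v = (\<lambda>\<rho>. if \<rho> \<in> SYT lam_n then v (extend \<rho>) else (\<lambda>_. 0))"

lemma Phi_eq_free_part_Vres: "Phi n lam v = (\<lambda>\<rho>. free_part (Suc n) (Vres v \<rho>))"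
  by (intro ext) (simp add: Phi_def Vres_def free_part_def)

lemma Vres_coeff: "(\<lambda>\<sigma>. Vres v \<sigma> \<alpha>) = qres (\<lambda>\<sigma>. v \<sigma> \<alpha>)"
  by (rule ext) (simp add: Vres_def qres_def)

lemma wf_vec_Vres: "wf_vec lam_Suc v \<Longrightarrow> wf_vec lam_n (Vres v)"
  by (simp add: wf_vec_def Vres_def)

lemma Tcoef_extend_swap:
  assumes \<rho>: "\<rho> \<in> SYT lam_n" and i: "1 \<le> i" "Suc i \<le> n"
  shows "Tcoef lam_Suc i (extend (swap_tab i \<rho>)) (extend \<rho>) = Tcoef lam_n i (swap_tab i \<rho>) \<rho>"
proof -
  have ne: "swap_tab i \<rho> \<noteq> \<rho>" "swap_tab i (extend \<rho>) \<noteq> extend \<rho>"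
    using swap_tab_neq[OF \<rho> i(1)] swap_tab_neq[OF extend_SYT[OF \<rho>] i(1)] i by simp_all
  have "Tcoef lam_Suc i (swap_tab i (extend \<rho>)) (extend \<rho>) = Tcoef lam_n i (swap_tab i \<rho>) \<rho>"
    unfolding Tcoef_swap[OF ne(2) extend_SYT[OF \<rho>]] Tcoef_swap[OF ne(1) \<rho>] content_extend[OF i(2)] ..
  then show ?thesis
    unfolding swap_tab_extend[OF i(2)] .
qed

lemma ST_extend:
  assumes \<rho>: "\<rho> \<in> SYT lam_n" and i: "1 \<le> i" "Suc i \<le> n"
  shows "ST lam_Suc i x (extend \<rho>) = ST lam_n i (qres x) \<rho>"
proof -
  have i': "Suc i \<le> sum_list lam_Suc" "Suc i \<le> sum_list lam_n"
    using i by simp_all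
  have "Tcoef lam_Suc i (extend \<rho>) (extend \<rho>) = Tcoef lam_n i \<rho> \<rho>"
    unfolding Tcoef_diag content_extend[OF i(2)] ..
  moreover have "qres x \<rho> = x (extend \<rho>)"
    using \<rho> by (simp add: qres_def)
  moreover have "qres x (swap_tab i \<rho>) = x (extend (swap_tab i \<rho>))" if "swap_tab i \<rho> \<in> SYT lam_n"
    using that by (simp add: qres_def)
  ultimately show ?thesis
    unfolding ST_eq[OF extend_SYT[OF \<rho>] i(1) i'(1)] ST_eq[OF \<rho> i(1) i'(2)] swap_tab_extend[OF i(2)]
      extend_swap_tab_SYT_iff[OF \<rho> i(2)] Tcoef_extend_swap[OF \<rho> i]
    by simp
qed

lemma qres_ST:
  assumes "1 \<le> i" "Suc i \<le> n"
  shows "qres (ST lam_Suc i x) = ST lam_n i (qres x)"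
proof
  fix \<rho>
  show "qres (ST lam_Suc i x) \<rho> = ST lam_n i (qres x) \<rho>"
    using ST_extend[OF _ assms, of \<rho> x] ST_not_SYT[of \<rho> lam_n]
    unfolding qres_def[of "ST lam_Suc i x"] by simp
qed

lemma qres_STinv: "1 \<le> i \<Longrightarrow> Suc i \<le> n \<Longrightarrow> qres (STinv lam_Suc i x) = STinv lam_n i (qres x)"
  by (rule ext) (simp add: STinv_def qres_ST[symmetric], simp add: qres_def)

lemma qres_STinv_upto: "k < n \<Longrightarrow> qres (STinv_upto lam_Suc k x) = STinv_upto lam_n k (qres x)"
  by (induct k arbitrary: x) (simp_all add: STinv_upto_Suc qres_STinv)

lemma VT_Vres:
  assumes v: "wf_vec lam_Suc v" and i: "1 \<le> i" "Suc i \<le> n"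
  shows "Vres (VT lam_Suc i v) = VT lam_n i (Vres v)"
proof (intro ext)
  fix \<rho> \<alpha>
  show "Vres (VT lam_Suc i v) \<rho> \<alpha> = VT lam_n i (Vres v) \<rho> \<alpha>"
  proof (cases "\<rho> \<in> SYT lam_n")
    case True
    then have "Vres (VT lam_Suc i v) \<rho> \<alpha> = VT lam_Suc i v (extend \<rho>) \<alpha>"
      by (simp add: Vres_def)
    also have "\<dots> = VT lam_n i (Vres v) \<rho> \<alpha>"
      unfolding VT_eq Vres_coeff ST_extend[OF True i] using True by (simp add: Vres_def)
    finally show ?thesis .
  next
    case False
    then show ?thesis
      by (simp add: Vres_def VT_eq ST_not_SYT)
  qed
qed

lemma Phi_VT:
  assumes v: "wf_vec lam_Suc v" and i: "1 \<le> i" "Suc i \<le> n"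
  shows "Phi n lam (VT lam_Suc i v) = VT lam_n i (Phi n lam v)"
  using i unfolding Phi_eq_free_part_Vres VT_Vres[OF v i] by (simp add: VT_free_part wf_vec_Vres[OF v])

lemma Phi_VTinv:
  assumes "wf_vec lam_Suc v" "1 \<le> i" "Suc i \<le> n"
  shows "Phi n lam (VTinv lam_Suc i v) = VTinv lam_n i (Phi n lam v)"
  unfolding VTinv_eq Phi_lin Phi_VT[OF assms] ..

lemma Phi_foldr_VT:
  assumes v: "wf_vec lam_Suc v" and l: "\<forall>i\<in>set l. 1 \<le> i \<and> Suc i \<le> n"
  shows "Phi n lam (foldr (VT lam_Suc) l v) = foldr (VT lam_n) l (Phi n lam v)"
  using l by (induct l) (simp_all add: Phi_VT wf_vec_foldr_VT[OF v])

text \<open>On monomials free of X_(n+1) the divided-difference part of T_n vanishes, and the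
  quadratic relation turns T_1^-1 ... T_n^-1 T_n into T_1^-1 ... T_(n-1)^-1.\<close>

lemma Vpi_VT_extend:
  assumes v: "wf_vec lam_Suc v" and n: "1 \<le> n" and \<rho>: "\<rho> \<in> SYT lam_n" and \<alpha>: "\<alpha> (Suc n) = 0"
  shows "Vpi lam_Suc (VT lam_Suc n v) (extend \<rho>) \<alpha> =
    tt ^ n * (qq ^ \<alpha> 1 * STinv_upto lam_Suc (n - 1) (\<lambda>\<sigma>. v \<sigma> (pi_exps n \<alpha>)) (extend \<rho>))"
proof -
  let ?w = "\<lambda>\<sigma>. v \<sigma> (pi_exps n \<alpha>)"
  have "pD n (v \<sigma>) (pi_exps (Suc n) \<alpha>) = 0" for \<sigma>
    using n \<alpha> by (intro pD_exp_0) (simp add: pi_exps_def)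
  then have "(\<lambda>\<sigma>. ppi (Suc n) (VT lam_Suc n v \<sigma>) \<alpha>) = (\<lambda>\<sigma>. qq ^ \<alpha> 1 * ST lam_Suc n ?w \<sigma>)"
    by (simp add: ppi_eq VT_eq pi_exps_Suc_transpose[OF n])
  moreover have "STinv_upto lam_Suc n (ST lam_Suc n ?w) = STinv_upto lam_Suc (n - 1) ?w"
    using STinv_upto_Suc[of lam_Suc "n - 1"] n
      STinv_ST[OF sorted_lam_Suc wf_vec_SYT_supported[OF v], of n] by simp
  ultimately show ?thesis
    by (simp add: Vpi_eq_Pbar[OF wf_vec_VT[OF v]] Pbar_eq_STinv_upto STinv_upto_mult)
qed

lemma Vpi_Vres:
  assumes v: "wf_vec lam_Suc v" and n: "1 \<le> n" and \<rho>: "\<rho> \<in> SYT lam_n"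
  shows "Vpi lam_n (Vres v) \<rho> \<alpha> =
    tt ^ (n - 1) * (qq ^ \<alpha> 1 * STinv_upto lam_Suc (n - 1) (\<lambda>\<sigma>. v \<sigma> (pi_exps n \<alpha>)) (extend \<rho>))"
proof -
  have "sum_list lam_n = Suc (n - 1)"
    using n by simp
  then have "Vpi lam_n (Vres v) \<rho> \<alpha> =
      tt ^ (n - 1) * (qq ^ \<alpha> 1 * STinv_upto lam_n (n - 1) (qres (\<lambda>\<sigma>. v \<sigma> (pi_exps n \<alpha>))) \<rho>)"
    using Vres_coeff[of v "pi_exps n \<alpha>"]
    by (simp add: Vpi_eq_Pbar[OF wf_vec_Vres[OF v]] ppi_eq Pbar_eq_STinv_upto STinv_upto_mult)
  also have "STinv_upto lam_n (n - 1) (qres (\<lambda>\<sigma>. v \<sigma> (pi_exps n \<alpha>))) \<rho> =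
      qres (STinv_upto lam_Suc (n - 1) (\<lambda>\<sigma>. v \<sigma> (pi_exps n \<alpha>))) \<rho>"
    using qres_STinv_upto[of "n - 1"] n by simp
  also have "\<dots> = STinv_upto lam_Suc (n - 1) (\<lambda>\<sigma>. v \<sigma> (pi_exps n \<alpha>)) (extend \<rho>)"
    using \<rho> unfolding qres_def by simp
  finally show ?thesis .
qed

lemma Phi_Vpi_VT:
  assumes v: "wf_vec lam_Suc v" and n: "1 \<le> n"
  shows "Phi n lam (\<lambda>\<tau> \<alpha>. Vpi lam_Suc (VT lam_Suc n v) \<tau> \<alpha> / tt ^ n) =
    (\<lambda>\<tau> \<alpha>. Vpi lam_n (Phi n lam v) \<tau> \<alpha> / tt ^ (n - 1))"
proof (intro ext)
  fix \<rho> \<alpha>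
  have "sum_list lam_n < Suc n"
    by simp
  have rhs: "Vpi lam_n (Phi n lam v) \<rho> \<alpha> = (if \<alpha> (Suc n) = 0 then Vpi lam_n (Vres v) \<rho> \<alpha> else 0)"
    unfolding Phi_eq_free_part_Vres Vpi_free_part[OF \<open>sum_list lam_n < Suc n\<close>]
    by (simp add: free_part_def)
  have tt_n: "tt ^ n = tt * tt ^ (n - 1)"
    using n by (simp flip: power_Suc)
  show "Phi n lam (\<lambda>\<tau> \<alpha>. Vpi lam_Suc (VT lam_Suc n v) \<tau> \<alpha> / tt ^ n) \<rho> \<alpha> =
      Vpi lam_n (Phi n lam v) \<rho> \<alpha> / tt ^ (n - 1)"
  proof (cases "\<alpha> (Suc n) = 0 \<and> \<rho> \<in> SYT lam_n")
    case True
    then show ?thesis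
      using Vpi_VT_extend[OF v n] Vpi_Vres[OF v n] rhs tt_n by (simp add: Phi_def)
  next
    case False
    have "wf_vec lam_n (Vpi lam_n (Vres v))"
      using n by (intro wf_vec_Vpi[OF wf_vec_Vres[OF v], of "n - 1"]) simp
    then show ?thesis
      using False rhs by (auto simp: Phi_def wf_vec_def)
  qed
qed

lemma Phi_Vtheta_1:
  assumes v: "wf_vec lam_Suc v" and n: "1 \<le> n"
  shows "Phi n lam (Vtheta lam_Suc 1 v) = Vtheta lam_n 1 (Phi n lam v)"
proof -
  let ?w = "foldr (VT lam_Suc) (rev [1..<n]) v"
  have "rev [1..<Suc n] = n # rev [1..<n]"
    using n by simp
  then have "Phi n lam (Vtheta lam_Suc 1 v) = Phi n lam (\<lambda>\<tau> \<alpha>. Vpi lam_Suc (VT lam_Suc n ?w) \<tau> \<alpha> / tt ^ n)"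
    by simp
  also have "\<dots> = (\<lambda>\<tau> \<alpha>. Vpi lam_n (Phi n lam ?w) \<tau> \<alpha> / tt ^ (n - 1))"
    by (rule Phi_Vpi_VT[OF wf_vec_foldr_VT[OF v] n])
  also have "Phi n lam ?w = foldr (VT lam_n) (rev [1..<n]) (Phi n lam v)"
    by (rule Phi_foldr_VT[OF v]) auto
  finally show ?thesis
    by simp
qed

lemma Phi_Vtheta:
  assumes "wf_vec lam_Suc v" "1 \<le> i" "i \<le> n"
  shows "Phi n lam (Vtheta lam_Suc i v) = Vtheta lam_n i (Phi n lam v)"
proof -
  obtain k where i: "i = Suc k"
    using assms(2) by (cases i) auto
  have "Phi n lam (Vtheta lam_Suc (Suc k) v) = Vtheta lam_n (Suc k) (Phi n lam v)"
    using assms(1,3) unfolding i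
  proof (induct k arbitrary: v)
    case 0
    then show ?case
      using Phi_Vtheta_1 by simp
  next
    case (Suc k)
    let ?v = "VTinv lam_Suc (Suc k) v"
    have "Phi n lam (Vtheta lam_Suc (Suc k) ?v) = Vtheta lam_n (Suc k) (Phi n lam ?v)"
      using Suc by (simp add: wf_vec_VTinv)
    moreover have "wf_vec lam_Suc (Vtheta lam_Suc (Suc k) ?v)"
      using wf_vec_Vtheta[of lam_Suc n] wf_vec_VTinv[OF Suc.prems(1)] by simp
    ultimately show ?case
      using Suc.prems by (simp add: Phi_mult Phi_VTinv)
  qed
  then show ?thesis
    unfolding i .
qed

end

section \<open>The last Jucys-Murphy element\<close>

lemma Vtheta_Suc_eq:
  assumes nu: "sorted_wrt (\<ge>) nu" and m: "sum_list nu = Suc m"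
  shows "wf_vec nu v \<Longrightarrow> k \<le> m \<Longrightarrow> Vtheta nu (Suc k) v =
    (\<lambda>\<tau> \<alpha>. VTinv_downto nu k (Vpi nu (foldr (VT nu) (rev [Suc k..<Suc m]) v)) \<tau> \<alpha> / tt ^ (m - k))"
proof (induct k arbitrary: v)
  case 0
  then show ?case
    using m by simp
next
  case (Suc k)
  let ?v = "VTinv nu (Suc k) v"
  let ?X = "VTinv_downto nu k (Vpi nu (foldr (VT nu) (rev [Suc (Suc k)..<Suc m]) v))"
  have "rev [Suc k..<Suc m] = rev [Suc (Suc k)..<Suc m] @ [Suc k]"
    using Suc.prems(2) by (simp add: upt_conv_Cons)
  moreover have "VT nu (Suc k) ?v = v"
    using Suc.prems(2) m by (intro VT_VTinv[OF Suc.prems(1) nu]) simp_all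
  ultimately have "foldr (VT nu) (rev [Suc k..<Suc m]) ?v = foldr (VT nu) (rev [Suc (Suc k)..<Suc m]) v"
    by simp
  then have IH: "Vtheta nu (Suc k) ?v = (\<lambda>\<tau> \<alpha>. (1 / tt ^ (m - k)) * ?X \<tau> \<alpha> + 0 * ?X \<tau> \<alpha>)"
    using Suc.hyps[OF wf_vec_VTinv[OF Suc.prems(1)]] Suc.prems(2) by simp
  have X: "wf_vec nu ?X"
    using m by (intro wf_vec_VTinv_downto wf_vec_Vpi wf_vec_foldr_VT Suc.prems(1))
  have "m - k = Suc (m - Suc k)"
    using Suc.prems(2) by simp
  then show ?case
    unfolding Vtheta.simps IH VTinv_lin[OF X X] by (simp add: fun_eq_iff)
qed

definition cycle_exps :: "nat \<Rightarrow> (nat \<Rightarrow> nat) \<Rightarrow> (nat \<Rightarrow> nat)" where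
  "cycle_exps k \<alpha> = (\<lambda>j. if j = 1 then \<alpha> (Suc k) else if 2 \<le> j \<and> j \<le> Suc k then \<alpha> (j - 1) else \<alpha> j)"

lemma cycle_exps_0: "cycle_exps 0 \<alpha> = \<alpha>"
  by (rule ext) (simp add: cycle_exps_def)

lemma cycle_exps_transpose:
  "cycle_exps k (\<alpha> \<circ> transpose (Suc k) (Suc (Suc k))) = cycle_exps (Suc k) \<alpha>"
  by (rule ext) (auto simp: cycle_exps_def transpose_def)

lemma cycle_exps_1: "cycle_exps k \<alpha> 1 = \<alpha> (Suc k)"
  by (simp add: cycle_exps_def)

lemma pi_exps_cycle_exps: "pi_exps (Suc m) (cycle_exps m \<alpha>) = \<alpha>"
  by (rule ext) (simp add: cycle_exps_def pi_exps_def)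

text \<open>On monomials free of X_(k+1) the divided differences in T_k^-1 ... T_1^-1 vanish, so the
  polynomial part is only permuted cyclically.\<close>

lemma VTinv_downto_eq:
  "wf_vec nu u \<Longrightarrow> \<alpha> (Suc k) = 0 \<Longrightarrow>
   VTinv_downto nu k u \<tau> \<alpha> = STinv_downto nu k (\<lambda>\<sigma>. u \<sigma> (cycle_exps k \<alpha>)) \<tau>"
proof (induct k arbitrary: \<alpha> \<tau>)
  case 0
  then show ?case
    by (simp add: cycle_exps_0)
next
  case (Suc k)
  let ?X = "VTinv_downto nu k u" and ?s\<alpha> = "\<alpha> \<circ> transpose (Suc k) (Suc (Suc k))"
  have "?X \<sigma> ?s\<alpha> = STinv_downto nu k (\<lambda>\<sigma>. u \<sigma> (cycle_exps (Suc k) \<alpha>)) \<sigma>" for \<sigma>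
    using Suc.hyps[OF Suc.prems(1), of ?s\<alpha> \<sigma>] Suc.prems(2) by (simp add: cycle_exps_transpose[unfolded comp_def] comp_def)
  moreover have "pD (Suc k) (?X \<tau>) \<alpha> = ?X \<tau> ?s\<alpha> - ?X \<tau> \<alpha>"
    using pD_exp_Suc_0[where i = "Suc k" and \<alpha> = \<alpha>, OF wf_vec_fin_supp[OF wf_vec_VTinv_downto[OF Suc.prems(1), of k], of \<tau>] Suc.prems(2)]
    by (simp add: psw_apply)
  ultimately show ?case
    by (simp add: VTinv_def VT_eq STinv_def algebra_simps) (metis distrib_left)
qed

lemma Vtheta_top_eigen:
  assumes nu: "sorted_wrt (\<ge>) nu" and m: "sum_list nu = Suc m" and v: "wf_vec nu v"
    and \<tau>: "\<tau> \<in> SYT nu" and \<alpha>: "\<alpha> (Suc m) = 0"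
  shows "Vtheta nu (Suc m) v \<tau> \<alpha> = tpow (content \<tau> (Suc m)) * v \<tau> \<alpha>"
proof -
  have "Vpi nu v \<sigma> (cycle_exps m \<alpha>) = tt ^ m * STinv_upto nu m (\<lambda>\<sigma>'. v \<sigma>' \<alpha>) \<sigma>" for \<sigma>
    using \<alpha> m by (simp add: Vpi_eq_Pbar[OF v] ppi_eq pi_exps_cycle_exps cycle_exps_1[simplified] Pbar_eq_STinv_upto)
  then have "Vtheta nu (Suc m) v \<tau> \<alpha> = tt ^ m * STinv_downto nu m (STinv_upto nu m (\<lambda>\<sigma>. v \<sigma> \<alpha>)) \<tau>"
    using Vtheta_Suc_eq[OF nu m v, of m] VTinv_downto_eq[where k = m and \<alpha> = \<alpha>, OF wf_vec_Vpi[OF v m] \<alpha>]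
    by (simp add: STinv_downto_mult)
  also have "\<dots> = tpow (content \<tau> (Suc m)) * v \<tau> \<alpha>"
    using m by (intro STinv_downto_upto[OF nu wf_vec_SYT_supported[OF v] _ \<tau>]) simp
  finally show ?thesis .
qed

lemma (in stable_shift) Phi_Vtheta_Suc:
  assumes v: "wf_vec lam_Suc v"
  shows "Phi n lam (\<lambda>\<tau> \<alpha>. Vtheta lam_Suc (Suc n) v \<tau> \<alpha> - tt ^ (n - sum_list lam) * v \<tau> \<alpha>) = (\<lambda>_ _. 0)"
proof (intro ext)
  fix \<rho> \<alpha>
  show "Phi n lam (\<lambda>\<tau> \<alpha>. Vtheta lam_Suc (Suc n) v \<tau> \<alpha> - tt ^ (n - sum_list lam) * v \<tau> \<alpha>) \<rho> \<alpha> = 0"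
  proof (cases "\<alpha> (Suc n) = 0 \<and> \<rho> \<in> SYT lam_n")
    case True
    then have "Vtheta lam_Suc (Suc n) v (extend \<rho>) \<alpha> = tt ^ (n - sum_list lam) * v (extend \<rho>) \<alpha>"
      using Vtheta_top_eigen[OF sorted_lam_Suc sum_list_lam_Suc v extend_SYT]
      unfolding content_extend_new tpow_def by simp
    then show ?thesis
      using True by (simp add: Phi_def)
  qed (auto simp: Phi_def)
qed

theorem mainTheorem12:
  fixes lam :: "nat list" and n :: nat
  assumes "is_partition lam"
    and "sum_list lam + lam1 lam \<le> n"
  shows "\<forall>v \<in> Vspace (shift_part (Suc n) lam).
     (\<forall>i. 1 \<le> i \<and> i \<le> n - 1 \<longrightarrow>
        Phi n lam (VT (shift_part (Suc n) lam) i v) = VT (shift_part n lam) i (Phi n lam v))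
   \<and> (\<forall>i. 1 \<le> i \<and> i \<le> n \<longrightarrow> Phi n lam (VX i v) = VX i (Phi n lam v))
   \<and> Phi n lam (VX (Suc n) v) = (\<lambda>_ _. 0)
   \<and> (1 \<le> n \<longrightarrow>
        Phi n lam (\<lambda>\<tau> \<alpha>. Vpi (shift_part (Suc n) lam) (VT (shift_part (Suc n) lam) n v) \<tau> \<alpha> / tt ^ n)
        = (\<lambda>\<tau> \<alpha>. Vpi (shift_part n lam) (Phi n lam v) \<tau> \<alpha> / tt ^ (n - 1)))
   \<and> (\<forall>i. 1 \<le> i \<and> i \<le> n \<longrightarrow>
        Phi n lam (Vtheta (shift_part (Suc n) lam) i v) = Vtheta (shift_part n lam) i (Phi n lam v))
   \<and> Phi n lam (\<lambda>\<tau> \<alpha>. Vtheta (shift_part (Suc n) lam) (Suc n) v \<tau> \<alpha>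
                        - tt ^ (n - sum_list lam) * v \<tau> \<alpha>) = (\<lambda>_ _. 0)"
proof -
  interpret stable_shift lam n
    using assms by unfold_locales
  show ?thesis
    by (auto dest!: Vspace_imp_wf_vec simp: Phi_VX Phi_VX_Suc Phi_Vpi_VT Phi_Vtheta Phi_Vtheta_Suc
        intro!: Phi_VT)
qed

end
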